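(* Let $n\ge2$, let $S\subseteq\mathbb{R}^n$ be a star-shaped body with kernel $K_S$, and let $v\in\mathbb{R}^n$ with $\|v\|=1$. Define $f_S(t)=\mathrm{vol}_{n-1}(\{x: v^Tx=t\}\cap S)$ and $f_K(t)=\mathrm{vol}_{n-1}(\{x:v^Tx=t\}\cap K_S)$. Then for $x\in\mathrm{supp}(f_K)$, $y\in\mathrm{supp}(f_S)$ and $\alpha\in[0,1]$, \[ f_S(\alpha x+(1-\alpha)y)^{\frac1{n-1}}\ge\alpha f_K(x)^{\frac1{n-1}}+(1-\alpha)f_S(y)^{\frac1{n-1}}. \] Furthermore, for all $x,y\in\mathbb{R}$ and $\alpha\in[0,1]$, $f_S(\alpha x+(1-\alpha)y)\ge f_K(x)^\alpha f_S(y)^{1-\alpha}$.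
   Context: A star-shaped body is a compact body (compact, nonempty interior, equal to the closure of its interior) whose kernel $K_S=\{x\in S:[x,y]\subseteq S\ \forall y\in S\}$ is nonempty. *)

theory Defs
  imports "HOL-Analysis.Analysis"
begin

definition kernel :: "'a::real_vector set \<Rightarrow> 'a set" where
  "kernel S = {x \<in> S. \<forall>y \<in> S. closed_segment x y \<subseteq> S}"

definition compact_body :: "'a::euclidean_space set \<Rightarrow> bool" where
  "compact_body S \<longleftrightarrow> compact S \<and> interior S \<noteq> {} \<and> S = closure (interior S)"

definition star_body :: "'a::euclidean_space set \<Rightarrow> bool" where
  "star_body S \<longleftrightarrow> compact_body S \<and> kernel S \<noteq> {}"

text \<open>(n-1)-dimensional volume of a set A contained in a hyperplane orthogonal to
  the unit vector v: the n-dimensional Lebesgue measure of the right prism of height 1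
  over A in direction v (Cavalieri).\<close>
definition hvol :: "'a::euclidean_space \<Rightarrow> 'a set \<Rightarrow> real" where
  "hvol v A = measure lebesgue ((\<lambda>(a, s). a + s *\<^sub>R v) ` (A \<times> {0..1}))"

definition section_fun :: "'a::euclidean_space \<Rightarrow> 'a set \<Rightarrow> real \<Rightarrow> real" where
  "section_fun v A t = hvol v ({x. v \<bullet> x = t} \<inter> A)"

definition supp :: "(real \<Rightarrow> real) \<Rightarrow> real set" where
  "supp f = closure {t. f t \<noteq> 0}"

definition mpow :: "real \<Rightarrow> real \<Rightarrow> real" where
  "mpow x a = (if a = 0 then 1 else x powr a)"

end

theory Submission
  imports Defs
begin

text \<open>Because every point of the kernel sees all of \<open>S\<close>, the \<open>\<alpha>\<close>-Minkowski combination of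
  the section of \<open>K\<^sub>S\<close> at height \<open>x\<close> with the section of \<open>S\<close> at height \<open>y\<close> lies in the
  section of \<open>S\<close> at height \<open>\<alpha> x + (1 - \<alpha>) y\<close>, so the first inequality is the
  Brunn--Minkowski inequality in dimension \<open>n - 1\<close>; the second follows from it by the weighted
  AM--GM inequality. Since the \<open>(n - 1)\<close>-volume of a section is the volume of the unit prism over
  it, the \<open>(n - 1)\<close>-dimensional inequality follows from the \<open>n\<close>-dimensional one applied to prisms
  whose heights are the \<open>(n - 1)\<close>-th roots of the section volumes. The \<open>n\<close>-dimensional inequality
  is proved in its multiplicative form, first for finite packings of boxes by the induction of
  Hadwiger and Ohmann, then for compact sets by covering them with grid boxes; it is made additive
  by rescaling both sets to unit volume.\<close>

section \<open>Minkowski combinations\<close>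

definition minkowski_comb :: "real \<Rightarrow> 'a::real_vector set \<Rightarrow> 'a set \<Rightarrow> 'a set" where
  "minkowski_comb l A B = (\<lambda>p. l *\<^sub>R fst p + (1 - l) *\<^sub>R snd p) ` (A \<times> B)"

lemma minkowski_comb_iff:
  "x \<in> minkowski_comb l A B \<longleftrightarrow> (\<exists>a\<in>A. \<exists>b\<in>B. x = l *\<^sub>R a + (1 - l) *\<^sub>R b)"
  unfolding minkowski_comb_def by force

lemma minkowski_comb_mono:
  "A \<subseteq> A' \<Longrightarrow> B \<subseteq> B' \<Longrightarrow> minkowski_comb l A B \<subseteq> minkowski_comb l A' B'"
  unfolding minkowski_comb_def by auto

lemma minkowski_comb_commute: "minkowski_comb l A B = minkowski_comb (1 - l) B A"
  unfolding minkowski_comb_iff set_eq_iff by (auto simp: add.commute)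

lemma compact_minkowski_comb:
  fixes A B :: "'a::real_normed_vector set"
  assumes "compact A" "compact B"
  shows "compact (minkowski_comb l A B)"
  unfolding minkowski_comb_def
  by (intro compact_continuous_image continuous_intros compact_Times assms)

lemma minkowski_comb_halfspaces_le:
  assumes "0 \<le> l" "l \<le> 1"
  shows "minkowski_comb l (A \<inter> {x. x \<bullet> k \<le> c}) (B \<inter> {x. x \<bullet> k \<le> d})
    \<subseteq> minkowski_comb l A B \<inter> {x. x \<bullet> k \<le> l * c + (1 - l) * d}"
proof
  fix x assume "x \<in> minkowski_comb l (A \<inter> {x. x \<bullet> k \<le> c}) (B \<inter> {x. x \<bullet> k \<le> d})"
  then obtain a b where a: "a \<in> A" "a \<bullet> k \<le> c" and b: "b \<in> B" "b \<bullet> k \<le> d"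
    and x: "x = l *\<^sub>R a + (1 - l) *\<^sub>R b"
    unfolding minkowski_comb_iff by blast
  have "x \<bullet> k = l * (a \<bullet> k) + (1 - l) * (b \<bullet> k)" by (simp add: x inner_simps)
  also have "\<dots> \<le> l * c + (1 - l) * d"
    using a b assms by (intro add_mono mult_left_mono) auto
  finally show "x \<in> minkowski_comb l A B \<inter> {x. x \<bullet> k \<le> l * c + (1 - l) * d}"
    using a b x by (auto simp: minkowski_comb_iff)
qed

lemma minkowski_comb_halfspaces_ge:
  assumes "0 \<le> l" "l \<le> 1"
  shows "minkowski_comb l (A \<inter> {x. x \<bullet> k \<ge> c}) (B \<inter> {x. x \<bullet> k \<ge> d})
    \<subseteq> minkowski_comb l A B \<inter> {x. x \<bullet> k \<ge> l * c + (1 - l) * d}"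
proof
  fix x assume "x \<in> minkowski_comb l (A \<inter> {x. x \<bullet> k \<ge> c}) (B \<inter> {x. x \<bullet> k \<ge> d})"
  then obtain a b where a: "a \<in> A" "a \<bullet> k \<ge> c" and b: "b \<in> B" "b \<bullet> k \<ge> d"
    and x: "x = l *\<^sub>R a + (1 - l) *\<^sub>R b"
    unfolding minkowski_comb_iff by blast
  have "l * c + (1 - l) * d \<le> l * (a \<bullet> k) + (1 - l) * (b \<bullet> k)"
    using a b assms by (intro add_mono mult_left_mono) auto
  also have "\<dots> = x \<bullet> k" by (simp add: x inner_simps)
  finally show "x \<in> minkowski_comb l A B \<inter> {x. x \<bullet> k \<ge> l * c + (1 - l) * d}"
    using a b x by (auto simp: minkowski_comb_iff)
qed

lemma minkowski_comb_neighbourhoods_subset: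
  fixes A B :: "'a::real_normed_vector set"
  assumes "0 \<le> l" "l \<le> 1"
  shows "minkowski_comb l {x. \<exists>a\<in>A. dist x a \<le> e} {x. \<exists>b\<in>B. dist x b \<le> e}
    \<subseteq> {x. \<exists>m\<in>minkowski_comb l A B. dist x m \<le> e}"
proof
  fix x assume "x \<in> minkowski_comb l {x. \<exists>a\<in>A. dist x a \<le> e} {x. \<exists>b\<in>B. dist x b \<le> e}"
  then obtain y z a b where a: "a \<in> A" "dist y a \<le> e" and b: "b \<in> B" "dist z b \<le> e"
    and x: "x = l *\<^sub>R y + (1 - l) *\<^sub>R z"
    unfolding minkowski_comb_iff by blast
  have "x - (l *\<^sub>R a + (1 - l) *\<^sub>R b) = l *\<^sub>R (y - a) + (1 - l) *\<^sub>R (z - b)"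
    by (simp add: x algebra_simps)
  then have "dist x (l *\<^sub>R a + (1 - l) *\<^sub>R b) \<le> l * dist y a + (1 - l) * dist z b"
    using assms by (metis dist_norm norm_triangle_le norm_scaleR abs_of_nonneg diff_ge_0_iff_ge order_refl)
  also have "\<dots> \<le> l * e + (1 - l) * e"
    using a b assms by (intro add_mono mult_left_mono) auto
  finally have "dist x (l *\<^sub>R a + (1 - l) *\<^sub>R b) \<le> e"
    by (simp add: algebra_simps)
  moreover have "l *\<^sub>R a + (1 - l) *\<^sub>R b \<in> minkowski_comb l A B"
    using a b by (auto simp: minkowski_comb_iff)
  ultimately show "x \<in> {x. \<exists>m\<in>minkowski_comb l A B. dist x m \<le> e}"
    by blast
qed

lemma measure_mono_compact:
  "compact A \<Longrightarrow> compact B \<Longrightarrow> A \<subseteq> B \<Longrightarrow> measure lebesgue A \<le> measure lebesgue B"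
  by (intro measure_mono_fmeasurable fmeasurableD lmeasurable_compact)

section \<open>Brunn--Minkowski for boxes\<close>

lemma measure_lebesgue_cbox:
  "\<forall>i\<in>Basis. a \<bullet> i \<le> b \<bullet> i \<Longrightarrow> measure lebesgue (cbox a b) = (\<Prod>i\<in>Basis. b \<bullet> i - a \<bullet> i)"
  by (simp add: measure_completion measure_lborel_cbox inner_diff_left)

lemma inner_sum_Basis_coord:
  fixes f :: "'a::euclidean_space \<Rightarrow> real"
  assumes "j \<in> Basis"
  shows "(\<Sum>i\<in>Basis. f i *\<^sub>R i) \<bullet> j = f j"
  using assms by (simp add: inner_sum_left inner_Basis if_distrib cong: if_cong)

lemma cbox_convex_comb_subset_minkowski_comb:
  fixes a b c d :: "'a::euclidean_space"
  assumes ab: "\<forall>i\<in>Basis. a \<bullet> i \<le> b \<bullet> i" and cd: "\<forall>i\<in>Basis. c \<bullet> i \<le> d \<bullet> i"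
    and l: "0 \<le> l" "l \<le> 1"
  shows "cbox (l *\<^sub>R a + (1 - l) *\<^sub>R c) (l *\<^sub>R b + (1 - l) *\<^sub>R d)
    \<subseteq> minkowski_comb l (cbox a b) (cbox c d)"
proof
  fix x assume x: "x \<in> cbox (l *\<^sub>R a + (1 - l) *\<^sub>R c) (l *\<^sub>R b + (1 - l) *\<^sub>R d)"
  define w where "w i = l * (b \<bullet> i - a \<bullet> i) + (1 - l) * (d \<bullet> i - c \<bullet> i)" for i
  have w0: "0 \<le> w i" if "i \<in> Basis" for i
    using ab cd l that by (simp add: w_def)
  have x_bounds: "0 \<le> x \<bullet> i - (l * (a \<bullet> i) + (1 - l) * (c \<bullet> i)) \<and>
      x \<bullet> i - (l * (a \<bullet> i) + (1 - l) * (c \<bullet> i)) \<le> w i" if "i \<in> Basis" for i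
    using x that by (auto simp: mem_box inner_simps w_def algebra_simps)
  \<comment> \<open>Both boxes are entered at the same relative position \<open>t i\<close> in every coordinate.\<close>
  define t where "t i = (if w i = 0 then 0 else (x \<bullet> i - (l * (a \<bullet> i) + (1 - l) * (c \<bullet> i))) / w i)" for i
  have t01: "0 \<le> t i \<and> t i \<le> 1" if "i \<in> Basis" for i
    using x_bounds[OF that] w0[OF that] by (auto simp: t_def divide_simps)
  have xt: "x \<bullet> i = l * (a \<bullet> i) + (1 - l) * (c \<bullet> i) + t i * w i" if "i \<in> Basis" for i
    using x_bounds[OF that] w0[OF that] by (auto simp: t_def)
  define p where "p = (\<Sum>i\<in>Basis. (a \<bullet> i + t i * (b \<bullet> i - a \<bullet> i)) *\<^sub>R i)"
  define q where "q = (\<Sum>i\<in>Basis. (c \<bullet> i + t i * (d \<bullet> i - c \<bullet> i)) *\<^sub>R i)"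
  have between: "u \<le> u + s * (v - u) \<and> u + s * (v - u) \<le> v"
    if "u \<le> v" "0 \<le> s" "s \<le> 1" for u v s :: real
    using that mult_left_le_one_le[of "v - u" s] by auto
  have "p \<in> cbox a b" "q \<in> cbox c d"
    using ab cd t01 between by (auto simp: mem_box p_def q_def inner_sum_Basis_coord)
  moreover have "x = l *\<^sub>R p + (1 - l) *\<^sub>R q"
  proof (rule euclidean_eqI)
    fix i :: 'a assume i: "i \<in> Basis"
    have pq: "p \<bullet> i = a \<bullet> i + t i * (b \<bullet> i - a \<bullet> i)" "q \<bullet> i = c \<bullet> i + t i * (d \<bullet> i - c \<bullet> i)"
      using i by (simp_all add: p_def q_def inner_sum_Basis_coord)
    have "(l *\<^sub>R p + (1 - l) *\<^sub>R q) \<bullet> i = l * (p \<bullet> i) + (1 - l) * (q \<bullet> i)"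
      by (simp add: inner_simps)
    also have "\<dots> = x \<bullet> i"
      unfolding pq xt[OF i] w_def by (simp add: algebra_simps)
    finally show "x \<bullet> i = (l *\<^sub>R p + (1 - l) *\<^sub>R q) \<bullet> i" ..
  qed
  ultimately show "x \<in> minkowski_comb l (cbox a b) (cbox c d)"
    unfolding minkowski_comb_iff by blast
qed

lemma brunn_minkowski_mult_cbox:
  fixes a b c d :: "'a::euclidean_space"
  assumes ab: "\<forall>i\<in>Basis. a \<bullet> i \<le> b \<bullet> i" and cd: "\<forall>i\<in>Basis. c \<bullet> i \<le> d \<bullet> i"
    and l: "0 < l" "l < 1"
  shows "measure lebesgue (cbox a b) powr l * measure lebesgue (cbox c d) powr (1 - l)
    \<le> measure lebesgue (minkowski_comb l (cbox a b) (cbox c d))"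
proof -
  define w where "w i = l * (b \<bullet> i - a \<bullet> i) + (1 - l) * (d \<bullet> i - c \<bullet> i)" for i
  have ef: "\<forall>i\<in>Basis. (l *\<^sub>R a + (1 - l) *\<^sub>R c) \<bullet> i \<le> (l *\<^sub>R b + (1 - l) *\<^sub>R d) \<bullet> i"
    using ab cd l by (auto simp: inner_simps intro!: add_mono mult_left_mono)
  have "measure lebesgue (cbox a b) powr l * measure lebesgue (cbox c d) powr (1 - l)
      = (\<Prod>i\<in>Basis. (b \<bullet> i - a \<bullet> i) powr l * (d \<bullet> i - c \<bullet> i) powr (1 - l))"
    by (simp add: measure_lebesgue_cbox ab cd prod_powr_distrib prod.distrib inner_diff_left)
  also have "\<dots> \<le> (\<Prod>i\<in>Basis. w i)"
  proof (rule prod_mono)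
    fix i :: 'a assume i: "i \<in> Basis"
    show "0 \<le> (b \<bullet> i - a \<bullet> i) powr l * (d \<bullet> i - c \<bullet> i) powr (1 - l) \<and>
        (b \<bullet> i - a \<bullet> i) powr l * (d \<bullet> i - c \<bullet> i) powr (1 - l) \<le> w i"
    proof (cases "b \<bullet> i - a \<bullet> i = 0 \<or> d \<bullet> i - c \<bullet> i = 0")
      case True
      then show ?thesis using ab cd i l by (auto simp: w_def)
    next
      case False
      then show ?thesis
        using ab cd i l Youngs_inequality_0[of l "1 - l" "b \<bullet> i - a \<bullet> i" "d \<bullet> i - c \<bullet> i"]
        by (force simp: w_def)
    qed
  qed
  also have "\<dots> = measure lebesgue (cbox (l *\<^sub>R a + (1 - l) *\<^sub>R c) (l *\<^sub>R b + (1 - l) *\<^sub>R d))"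
    by (subst measure_lebesgue_cbox[OF ef]) (simp add: w_def inner_simps algebra_simps)
  also have "\<dots> \<le> measure lebesgue (minkowski_comb l (cbox a b) (cbox c d))"
    using ab cd l
    by (intro measure_mono_compact compact_cbox compact_minkowski_comb
        cbox_convex_comb_subset_minkowski_comb) auto
  finally show ?thesis .
qed

section \<open>Hadwiger--Ohmann induction\<close>

lemma measure_eq_of_subset_negligible_diff:
  assumes "X \<subseteq> Y" "Y - X \<subseteq> N" "negligible N" "Y \<in> lmeasurable"
  shows "measure lebesgue X = measure lebesgue Y"
proof -
  have "negligible (Y - X \<union> (X - Y))"
    by (rule negligible_subset[OF assms(3)]) (use assms in auto)
  then show ?thesis by (rule measure_negligible_symdiff[OF assms(4)])
qed

lemma compact_Int_halfspace_le: "compact S \<Longrightarrow> compact (S \<inter> {x. x \<bullet> k \<le> c})"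
  by (intro compact_Int_closed closed_Collect_le continuous_intros)

lemma compact_Int_halfspace_ge: "compact S \<Longrightarrow> compact (S \<inter> {x. x \<bullet> k \<ge> c})"
  by (intro compact_Int_closed closed_Collect_le continuous_intros)

lemma measure_halfspaces_split:
  fixes S :: "'a::euclidean_space set"
  assumes S: "compact S" and k: "k \<in> Basis"
  shows "measure lebesgue S
    = measure lebesgue (S \<inter> {x. x \<bullet> k \<le> c}) + measure lebesgue (S \<inter> {x. x \<bullet> k \<ge> c})"
proof -
  have "S = (S \<inter> {x. x \<bullet> k \<le> c}) \<union> (S \<inter> {x. x \<bullet> k \<ge> c})" by auto
  then have "measure lebesgue S = measure lebesgue (S \<inter> {x. x \<bullet> k \<le> c}) + measure lebesgue (S \<inter> {x. x \<bullet> k \<ge> c})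
      - measure lebesgue (S \<inter> {x. x \<bullet> k \<le> c} \<inter> (S \<inter> {x. x \<bullet> k \<ge> c}))"
    by (metis measure_Un3 lmeasurable_compact compact_Int_halfspace_le compact_Int_halfspace_ge S)
  moreover have "measure lebesgue (S \<inter> {x. x \<bullet> k \<le> c} \<inter> (S \<inter> {x. x \<bullet> k \<ge> c})) = 0"
    by (rule negligible_imp_measure0, rule negligible_subset[OF negligible_standard_hyperplane[OF k, of c]])
       auto
  ultimately show ?thesis by linarith
qed

lemma measure_ge_halfspaces_split:
  fixes S :: "'a::euclidean_space set"
  assumes S: "compact S" and k: "k \<in> Basis"
    and "M1 \<subseteq> S \<inter> {x. x \<bullet> k \<le> c}" "compact M1"
    and "M2 \<subseteq> S \<inter> {x. x \<bullet> k \<ge> c}" "compact M2"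
  shows "measure lebesgue M1 + measure lebesgue M2 \<le> measure lebesgue S"
proof -
  have "measure lebesgue M1 \<le> measure lebesgue (S \<inter> {x. x \<bullet> k \<le> c})"
    using assms by (intro measure_mono_compact compact_Int_halfspace_le)
  moreover have "measure lebesgue M2 \<le> measure lebesgue (S \<inter> {x. x \<bullet> k \<ge> c})"
    using assms by (intro measure_mono_compact compact_Int_halfspace_ge)
  ultimately show ?thesis using measure_halfspaces_split[OF S k, of c] by linarith
qed

lemma measure_Int_halfspace_lipschitz:
  fixes S :: "'a::euclidean_space set"
  assumes S: "compact S" and k: "k \<in> Basis"
  obtains L where "0 \<le> L" "\<And>c c'. c \<le> c' \<Longrightarrow>
    measure lebesgue (S \<inter> {x. x \<bullet> k \<le> c'}) \<le> measure lebesgue (S \<inter> {x. x \<bullet> k \<le> c}) + L * (c' - c)"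
proof -
  obtain r where r: "\<forall>x\<in>S. norm x \<le> r" "0 \<le> r"
    using compact_imp_bounded[OF S] unfolding bounded_pos by (auto simp: less_imp_le)
  define L where "L = (2 * r) ^ (DIM('a) - 1)"
  show ?thesis
  proof (rule that)
    show "0 \<le> L" using r by (simp add: L_def)
    fix c c' :: real assume cc: "c \<le> c'"
    \<comment> \<open>The slab \<open>c < x \<bullet> k \<le> c'\<close> of \<open>S\<close> lies in a box of width \<open>c' - c\<close> and side \<open>2 r\<close> otherwise.\<close>
    define lo where "lo = - r *\<^sub>R One + (c + r) *\<^sub>R k"
    define hi where "hi = r *\<^sub>R One + (c' - r) *\<^sub>R k"
    have loj: "lo \<bullet> j = (if j = k then c else - r)" if "j \<in> Basis" for j
      using that k by (auto simp: lo_def inner_simps inner_Basis)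
    have hij: "hi \<bullet> j = (if j = k then c' else r)" if "j \<in> Basis" for j
      using that k by (auto simp: hi_def inner_simps inner_Basis)
    have lohi: "\<forall>j\<in>Basis. lo \<bullet> j \<le> hi \<bullet> j" using loj hij cc r by auto
    have slab: "S \<inter> {x. x \<bullet> k \<le> c'} \<subseteq> (S \<inter> {x. x \<bullet> k \<le> c}) \<union> cbox lo hi"
    proof
      fix x assume x: "x \<in> S \<inter> {x. x \<bullet> k \<le> c'}"
      have "\<bar>x \<bullet> j\<bar> \<le> r" if "j \<in> Basis" for j
        using x r Basis_le_norm[OF that, of x] by auto
      then have "x \<in> cbox lo hi" if "c < x \<bullet> k"
        using x that unfolding mem_box by (force simp: loj hij abs_le_iff)
      then show "x \<in> (S \<inter> {x. x \<bullet> k \<le> c}) \<union> cbox lo hi"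
        using x by force
    qed
    have "measure lebesgue (cbox lo hi) = (hi \<bullet> k - lo \<bullet> k) * (\<Prod>j\<in>Basis - {k}. hi \<bullet> j - lo \<bullet> j)"
      by (simp add: measure_lebesgue_cbox[OF lohi] prod.remove[OF finite_Basis k])
    also have "\<dots> = L * (c' - c)"
      using k by (simp add: loj hij L_def card_Diff_singleton mult.commute)
    finally have box: "measure lebesgue (cbox lo hi) = L * (c' - c)" .
    have "measure lebesgue (S \<inter> {x. x \<bullet> k \<le> c'}) \<le> measure lebesgue ((S \<inter> {x. x \<bullet> k \<le> c}) \<union> cbox lo hi)"
      by (intro measure_mono_compact slab compact_Un compact_cbox compact_Int_halfspace_le S)
    also have "\<dots> \<le> measure lebesgue (S \<inter> {x. x \<bullet> k \<le> c}) + measure lebesgue (cbox lo hi)"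
      by (intro measure_Un_le fmeasurableD lmeasurable_compact compact_Int_halfspace_le S lmeasurable_cbox)
    finally show "measure lebesgue (S \<inter> {x. x \<bullet> k \<le> c'})
        \<le> measure lebesgue (S \<inter> {x. x \<bullet> k \<le> c}) + L * (c' - c)"
      by (simp only: box)
  qed
qed

lemma continuous_on_measure_Int_halfspace:
  fixes S :: "'a::euclidean_space set"
  assumes S: "compact S" and k: "k \<in> Basis"
  shows "continuous_on UNIV (\<lambda>c. measure lebesgue (S \<inter> {x. x \<bullet> k \<le> c}))"
proof -
  obtain L where L: "0 \<le> L" "\<And>c c'. c \<le> c' \<Longrightarrow>
      measure lebesgue (S \<inter> {x. x \<bullet> k \<le> c'}) \<le> measure lebesgue (S \<inter> {x. x \<bullet> k \<le> c}) + L * (c' - c)"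
    using measure_Int_halfspace_lipschitz[OF S k] by blast
  have mono: "measure lebesgue (S \<inter> {x. x \<bullet> k \<le> c}) \<le> measure lebesgue (S \<inter> {x. x \<bullet> k \<le> c'})"
    if "c \<le> c'" for c c'
    using that by (intro measure_mono_compact compact_Int_halfspace_le S) auto
  have "L-lipschitz_on UNIV (\<lambda>c. measure lebesgue (S \<inter> {x. x \<bullet> k \<le> c}))"
  proof (rule lipschitz_onI)
    fix c c' :: real
    show "dist (measure lebesgue (S \<inter> {x. x \<bullet> k \<le> c})) (measure lebesgue (S \<inter> {x. x \<bullet> k \<le> c'}))
        \<le> L * dist c c'"
      using L(2)[of c c'] mono[of c c'] L(2)[of c' c] mono[of c' c]
      by (cases "c \<le> c'") (auto simp: dist_real_def)
  qed (use L in auto)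
  then show ?thesis by (rule lipschitz_on_continuous_on)
qed

lemma measure_Int_halfspace_eq_fraction:
  fixes S :: "'a::euclidean_space set"
  assumes S: "compact S" and k: "k \<in> Basis" and \<theta>: "0 \<le> \<theta>" "\<theta> \<le> 1"
  obtains d where "measure lebesgue (S \<inter> {x. x \<bullet> k \<le> d}) = \<theta> * measure lebesgue S"
proof -
  define F where "F d = measure lebesgue (S \<inter> {x. x \<bullet> k \<le> d})" for d
  obtain r where r: "\<forall>x\<in>S. norm x \<le> r" "0 \<le> r"
    using compact_imp_bounded[OF S] unfolding bounded_pos by (auto simp: less_imp_le)
  have xk: "\<bar>x \<bullet> k\<bar> \<le> r" if "x \<in> S" for x
    using r that Basis_le_norm[OF k, of x] by fastforce
  have "S \<inter> {x. x \<bullet> k \<le> - r - 1} = {}" "S \<inter> {x. x \<bullet> k \<le> r} = S"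
    using xk by fastforce+
  then have "F (- r - 1) = 0" "F r = measure lebesgue S"
    by (simp_all add: F_def)
  moreover have "continuous_on {- r - 1..r} F"
    unfolding F_def using continuous_on_measure_Int_halfspace[OF S k] continuous_on_subset by blast
  ultimately obtain d where "F d = \<theta> * measure lebesgue S"
    using IVT'[of F "- r - 1" "\<theta> * measure lebesgue S" r] \<theta> r
    by (auto simp: mult_le_cancel_right1 measure_nonneg mult_left_le_one_le)
  then show ?thesis using that by (simp add: F_def)
qed

text \<open>Boxes are encoded by the pairs of their lower and upper corners; the separating coordinate
  makes the interiors of the boxes in a packing pairwise disjoint.\<close>

definition box_packing :: "('a::euclidean_space \<times> 'a) set \<Rightarrow> bool" where
  "box_packing C \<longleftrightarrow> finite C \<and> C \<noteq> {} \<and> (\<forall>p\<in>C. \<forall>i\<in>Basis. fst p \<bullet> i < snd p \<bullet> i) \<and>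
     (\<forall>p\<in>C. \<forall>q\<in>C. p \<noteq> q \<longrightarrow> (\<exists>i\<in>Basis. snd p \<bullet> i \<le> fst q \<bullet> i \<or> snd q \<bullet> i \<le> fst p \<bullet> i))"

definition boxes_union :: "('a::euclidean_space \<times> 'a) set \<Rightarrow> 'a set" where
  "boxes_union C = (\<Union>p\<in>C. cbox (fst p) (snd p))"

definition boxes_below :: "'a::euclidean_space \<Rightarrow> real \<Rightarrow> ('a \<times> 'a) set \<Rightarrow> ('a \<times> 'a) set" where
  "boxes_below k c C = (\<lambda>p. (fst p, \<Sum>i\<in>Basis. (if i = k then min (snd p \<bullet> k) c else snd p \<bullet> i) *\<^sub>R i))
     ` {p\<in>C. fst p \<bullet> k < c}"

definition boxes_above :: "'a::euclidean_space \<Rightarrow> real \<Rightarrow> ('a \<times> 'a) set \<Rightarrow> ('a \<times> 'a) set" where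
  "boxes_above k c C = (\<lambda>p. (\<Sum>i\<in>Basis. (if i = k then max (fst p \<bullet> k) c else fst p \<bullet> i) *\<^sub>R i, snd p))
     ` {p\<in>C. c < snd p \<bullet> k}"

lemma box_packing_finite: "box_packing C \<Longrightarrow> finite C"
  by (simp add: box_packing_def)

lemma boxes_union_empty [simp]: "boxes_union {} = {}"
  by (simp add: boxes_union_def)

lemma compact_boxes_union: "finite C \<Longrightarrow> compact (boxes_union C)"
  unfolding boxes_union_def by (intro compact_UN compact_cbox)

lemma boxes_union_below:
  assumes "k \<in> Basis"
  shows "boxes_union (boxes_below k c C)
    = (\<Union>p\<in>{p\<in>C. fst p \<bullet> k < c}. cbox (fst p) (snd p) \<inter> {x. x \<bullet> k \<le> c})"
  unfolding boxes_union_def boxes_below_def using interval_split(1)[OF assms]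
  by (simp add: image_image)

lemma boxes_union_above:
  assumes "k \<in> Basis"
  shows "boxes_union (boxes_above k c C)
    = (\<Union>p\<in>{p\<in>C. c < snd p \<bullet> k}. cbox (fst p) (snd p) \<inter> {x. x \<bullet> k \<ge> c})"
  unfolding boxes_union_def boxes_above_def using interval_split(2)[OF assms]
  by (simp add: image_image)

lemma boxes_union_below_subset:
  "k \<in> Basis \<Longrightarrow> boxes_union (boxes_below k c C) \<subseteq> boxes_union C \<inter> {x. x \<bullet> k \<le> c}"
  unfolding boxes_union_below by (auto simp: boxes_union_def)

lemma boxes_union_above_subset:
  "k \<in> Basis \<Longrightarrow> boxes_union (boxes_above k c C) \<subseteq> boxes_union C \<inter> {x. x \<bullet> k \<ge> c}"
  unfolding boxes_union_above by (auto simp: boxes_union_def)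

lemma measure_boxes_union_below:
  assumes k: "k \<in> Basis" and C: "finite C"
  shows "measure lebesgue (boxes_union (boxes_below k c C))
    = measure lebesgue (boxes_union C \<inter> {x. x \<bullet> k \<le> c})"
proof (rule measure_eq_of_subset_negligible_diff[OF boxes_union_below_subset[OF k] _
      negligible_standard_hyperplane[OF k, of c]])
  show "boxes_union C \<inter> {x. x \<bullet> k \<le> c} - boxes_union (boxes_below k c C) \<subseteq> {x. x \<bullet> k = c}"
  proof
    fix x assume x: "x \<in> boxes_union C \<inter> {x. x \<bullet> k \<le> c} - boxes_union (boxes_below k c C)"
    then obtain p where p: "p \<in> C" "x \<in> cbox (fst p) (snd p)" "x \<bullet> k \<le> c"
      by (auto simp: boxes_union_def)
    have "fst p \<bullet> k \<le> x \<bullet> k" using p(2) k by (auto simp: mem_box)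
    moreover have "\<not> fst p \<bullet> k < c" using x p unfolding boxes_union_below[OF k] by auto
    ultimately show "x \<in> {x. x \<bullet> k = c}" using p by auto
  qed
  show "boxes_union C \<inter> {x. x \<bullet> k \<le> c} \<in> lmeasurable"
    by (intro lmeasurable_compact compact_Int_halfspace_le compact_boxes_union C)
qed

lemma measure_boxes_union_above:
  assumes k: "k \<in> Basis" and C: "finite C"
  shows "measure lebesgue (boxes_union (boxes_above k c C))
    = measure lebesgue (boxes_union C \<inter> {x. x \<bullet> k \<ge> c})"
proof (rule measure_eq_of_subset_negligible_diff[OF boxes_union_above_subset[OF k] _
      negligible_standard_hyperplane[OF k, of c]])
  show "boxes_union C \<inter> {x. x \<bullet> k \<ge> c} - boxes_union (boxes_above k c C) \<subseteq> {x. x \<bullet> k = c}"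
  proof
    fix x assume x: "x \<in> boxes_union C \<inter> {x. x \<bullet> k \<ge> c} - boxes_union (boxes_above k c C)"
    then obtain p where p: "p \<in> C" "x \<in> cbox (fst p) (snd p)" "x \<bullet> k \<ge> c"
      by (auto simp: boxes_union_def)
    have "x \<bullet> k \<le> snd p \<bullet> k" using p(2) k by (auto simp: mem_box)
    moreover have "\<not> c < snd p \<bullet> k" using x p unfolding boxes_union_above[OF k] by auto
    ultimately show "x \<in> {x. x \<bullet> k = c}" using p by auto
  qed
  show "boxes_union C \<inter> {x. x \<bullet> k \<ge> c} \<in> lmeasurable"
    by (intro lmeasurable_compact compact_Int_halfspace_ge compact_boxes_union C)
qed

lemma measure_boxes_union_split:
  assumes k: "k \<in> Basis" and C: "finite C"
  shows "measure lebesgue (boxes_union C)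
    = measure lebesgue (boxes_union (boxes_below k c C)) + measure lebesgue (boxes_union (boxes_above k c C))"
  unfolding measure_boxes_union_below[OF k C] measure_boxes_union_above[OF k C]
  by (rule measure_halfspaces_split[OF compact_boxes_union[OF C] k])

lemma card_boxes_below_le: "finite C \<Longrightarrow> card (boxes_below k c C) \<le> card C"
  unfolding boxes_below_def by (rule le_trans[OF card_image_le card_mono]) auto

lemma card_boxes_above_le: "finite C \<Longrightarrow> card (boxes_above k c C) \<le> card C"
  unfolding boxes_above_def by (rule le_trans[OF card_image_le card_mono]) auto

lemma card_boxes_below_less:
  assumes "finite C" "q \<in> C" "c \<le> fst q \<bullet> k"
  shows "card (boxes_below k c C) < card C"
proof -
  have "card (boxes_below k c C) \<le> card {p\<in>C. fst p \<bullet> k < c}"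
    unfolding boxes_below_def using assms by (intro card_image_le) simp
  also have "\<dots> < card C" using assms by (intro psubset_card_mono) force+
  finally show ?thesis .
qed

lemma card_boxes_above_less:
  assumes "finite C" "q \<in> C" "snd q \<bullet> k \<le> c"
  shows "card (boxes_above k c C) < card C"
proof -
  have "card (boxes_above k c C) \<le> card {p\<in>C. c < snd p \<bullet> k}"
    unfolding boxes_above_def using assms by (intro card_image_le) simp
  also have "\<dots> < card C" using assms by (intro psubset_card_mono) force+
  finally show ?thesis .
qed

lemma box_packing_below:
  assumes ok: "box_packing C" and k: "k \<in> Basis" and ne: "boxes_below k c C \<noteq> {}"
  shows "box_packing (boxes_below k c C)"
proof -
  define g where "g p = (fst p, \<Sum>i\<in>Basis. (if i = k then min (snd p \<bullet> k) c else snd p \<bullet> i) *\<^sub>R i)"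
    for p :: "'a \<times> 'a"
  have L: "boxes_below k c C = g ` {p\<in>C. fst p \<bullet> k < c}" by (simp add: boxes_below_def g_def)
  have g: "fst (g p) = fst p" "snd (g p) \<bullet> j = (if j = k then min (snd p \<bullet> k) c else snd p \<bullet> j)"
    if "j \<in> Basis" for p j
    using that by (simp_all add: g_def inner_sum_Basis_coord)
  show ?thesis
    unfolding box_packing_def
  proof (intro conjI ballI impI)
    show "finite (boxes_below k c C)" "boxes_below k c C \<noteq> {}"
      using ok ne by (simp_all add: L box_packing_def)
  next
    fix p' i assume "p' \<in> boxes_below k c C" and i: "i \<in> (Basis::'a set)"
    then obtain p where "p \<in> C" "fst p \<bullet> k < c" "p' = g p" unfolding L by auto
    then show "fst p' \<bullet> i < snd p' \<bullet> i"
      using ok i by (auto simp: g box_packing_def)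
  next
    fix p' q' assume p': "p' \<in> boxes_below k c C" and q': "q' \<in> boxes_below k c C" and "p' \<noteq> q'"
    then obtain p q where "p \<in> C" "q \<in> C" "p \<noteq> q" "p' = g p" "q' = g q" unfolding L by auto
    then obtain i where i: "i \<in> Basis" "snd p \<bullet> i \<le> fst q \<bullet> i \<or> snd q \<bullet> i \<le> fst p \<bullet> i"
      using ok unfolding box_packing_def by blast
    then have "snd p' \<bullet> i \<le> fst q' \<bullet> i \<or> snd q' \<bullet> i \<le> fst p' \<bullet> i"
      using g[OF i(1)] unfolding \<open>p' = g p\<close> \<open>q' = g q\<close> by auto
    then show "\<exists>i\<in>Basis. snd p' \<bullet> i \<le> fst q' \<bullet> i \<or> snd q' \<bullet> i \<le> fst p' \<bullet> i"
      using i(1) by blast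
  qed
qed

lemma box_packing_above:
  assumes ok: "box_packing C" and k: "k \<in> Basis" and ne: "boxes_above k c C \<noteq> {}"
  shows "box_packing (boxes_above k c C)"
proof -
  define g where "g p = (\<Sum>i\<in>Basis. (if i = k then max (fst p \<bullet> k) c else fst p \<bullet> i) *\<^sub>R i, snd p)"
    for p :: "'a \<times> 'a"
  have L: "boxes_above k c C = g ` {p\<in>C. c < snd p \<bullet> k}" by (simp add: boxes_above_def g_def)
  have g: "snd (g p) = snd p" "fst (g p) \<bullet> j = (if j = k then max (fst p \<bullet> k) c else fst p \<bullet> j)"
    if "j \<in> Basis" for p j
    using that by (simp_all add: g_def inner_sum_Basis_coord)
  show ?thesis
    unfolding box_packing_def
  proof (intro conjI ballI impI)
    show "finite (boxes_above k c C)" "boxes_above k c C \<noteq> {}"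
      using ok ne by (simp_all add: L box_packing_def)
  next
    fix p' i assume "p' \<in> boxes_above k c C" and i: "i \<in> (Basis::'a set)"
    then obtain p where "p \<in> C" "c < snd p \<bullet> k" "p' = g p" unfolding L by auto
    then show "fst p' \<bullet> i < snd p' \<bullet> i"
      using ok i by (auto simp: g box_packing_def)
  next
    fix p' q' assume p': "p' \<in> boxes_above k c C" and q': "q' \<in> boxes_above k c C" and "p' \<noteq> q'"
    then obtain p q where "p \<in> C" "q \<in> C" "p \<noteq> q" "p' = g p" "q' = g q" unfolding L by auto
    then obtain i where i: "i \<in> Basis" "snd p \<bullet> i \<le> fst q \<bullet> i \<or> snd q \<bullet> i \<le> fst p \<bullet> i"
      using ok unfolding box_packing_def by blast
    then have "snd p' \<bullet> i \<le> fst q' \<bullet> i \<or> snd q' \<bullet> i \<le> fst p' \<bullet> i"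
      using g[OF i(1)] unfolding \<open>p' = g p\<close> \<open>q' = g q\<close> by auto
    then show "\<exists>i\<in>Basis. snd p' \<bullet> i \<le> fst q' \<bullet> i \<or> snd q' \<bullet> i \<le> fst p' \<bullet> i"
      using i(1) by blast
  qed
qed

lemma measure_boxes_union_pos:
  assumes "box_packing C"
  shows "0 < measure lebesgue (boxes_union C)"
proof -
  obtain p where p: "p \<in> C" and lt: "\<forall>i\<in>Basis. fst p \<bullet> i < snd p \<bullet> i"
    using assms unfolding box_packing_def by auto
  have "0 < (\<Prod>i\<in>Basis. snd p \<bullet> i - fst p \<bullet> i)"
    using lt by (intro prod_pos) auto
  also have "\<dots> = measure lebesgue (cbox (fst p) (snd p))"
    using lt by (simp add: measure_lebesgue_cbox less_imp_le inner_diff_left)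
  also have "\<dots> \<le> measure lebesgue (boxes_union C)"
    using assms p unfolding box_packing_def
    by (intro measure_mono_compact compact_cbox compact_boxes_union) (auto simp: boxes_union_def)
  finally show ?thesis .
qed

lemma box_packing_split:
  assumes A: "box_packing A" "2 \<le> card A"
  obtains k c where "k \<in> Basis"
    "box_packing (boxes_below k c A)" "card (boxes_below k c A) < card A"
    "box_packing (boxes_above k c A)" "card (boxes_above k c A) < card A"
proof -
  have fin: "finite A" using A by (simp add: box_packing_def)
  obtain p q where pq: "p \<in> A" "q \<in> A" "p \<noteq> q"
    using A(2) fin by (metis card_le_Suc0_iff_eq not_less_eq_eq numeral_2_eq_2)
  then obtain k where k: "k \<in> Basis" "snd p \<bullet> k \<le> fst q \<bullet> k \<or> snd q \<bullet> k \<le> fst p \<bullet> k"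
    using A unfolding box_packing_def by metis
  then obtain P Q where PQ: "P \<in> A" "Q \<in> A" "snd P \<bullet> k \<le> fst Q \<bullet> k"
    using pq by blast
  have lt: "fst r \<bullet> k < snd r \<bullet> k" if "r \<in> A" for r
    using A that k unfolding box_packing_def by blast
  \<comment> \<open>Cutting at the top face of \<open>P\<close> leaves \<open>P\<close> below and \<open>Q\<close> above.\<close>
  define c where "c = snd P \<bullet> k"
  have below: "boxes_below k c A \<noteq> {}"
    unfolding boxes_below_def c_def using PQ(1) lt[OF PQ(1)] by blast
  have above: "boxes_above k c A \<noteq> {}"
    unfolding boxes_above_def c_def using PQ lt[OF PQ(2)] by fastforce
  show ?thesis
  proof (rule that[OF k(1)])
    show "box_packing (boxes_below k c A)" by (rule box_packing_below[OF A(1) k(1) below])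
    show "box_packing (boxes_above k c A)" by (rule box_packing_above[OF A(1) k(1) above])
    show "card (boxes_below k c A) < card A"
      by (rule card_boxes_below_less[OF fin PQ(2)]) (simp add: c_def PQ(3))
    show "card (boxes_above k c A) < card A"
      by (rule card_boxes_above_less[OF fin PQ(1)]) (simp add: c_def)
  qed
qed

lemma measure_minkowski_comb_boxes_split:
  fixes A B :: "('a::euclidean_space \<times> 'a) set"
  assumes k: "k \<in> Basis" and fin: "finite A" "finite B" and l: "0 \<le> l" "l \<le> 1"
  shows "measure lebesgue (minkowski_comb l (boxes_union (boxes_below k c A)) (boxes_union (boxes_below k d B)))
      + measure lebesgue (minkowski_comb l (boxes_union (boxes_above k c A)) (boxes_union (boxes_above k d B)))
    \<le> measure lebesgue (minkowski_comb l (boxes_union A) (boxes_union B))"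
proof (rule measure_ge_halfspaces_split[OF _ k])
  show "minkowski_comb l (boxes_union (boxes_below k c A)) (boxes_union (boxes_below k d B))
      \<subseteq> minkowski_comb l (boxes_union A) (boxes_union B) \<inter> {x. x \<bullet> k \<le> l * c + (1 - l) * d}"
    using l by (intro order_trans[OF minkowski_comb_mono minkowski_comb_halfspaces_le]
        boxes_union_below_subset k) auto
  show "minkowski_comb l (boxes_union (boxes_above k c A)) (boxes_union (boxes_above k d B))
      \<subseteq> minkowski_comb l (boxes_union A) (boxes_union B) \<inter> {x. x \<bullet> k \<ge> l * c + (1 - l) * d}"
    using l by (intro order_trans[OF minkowski_comb_mono minkowski_comb_halfspaces_ge]
        boxes_union_above_subset k) auto
qed (use fin in \<open>simp_all add: compact_minkowski_comb compact_boxes_union boxes_below_def boxes_above_def\<close>)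

lemma powr_scale_mult_powr_scale:
  fixes t a b l :: real
  assumes "0 < t" "0 \<le> a" "0 \<le> b"
  shows "(t * a) powr l * (t * b) powr (1 - l) = t * (a powr l * b powr (1 - l))"
proof -
  have "(t * a) powr l * (t * b) powr (1 - l) = (t powr l * t powr (1 - l)) * (a powr l * b powr (1 - l))"
    by (simp only: powr_mult) (simp add: mult_ac)
  also have "t powr l * t powr (1 - l) = t"
    using assms by (simp add: powr_add[symmetric])
  finally show ?thesis .
qed

text \<open>The inductive step of Hadwiger and Ohmann: split \<open>A\<close> by a coordinate hyperplane separating two of
  its boxes, and split \<open>B\<close> by a parallel hyperplane into parts of the same volume proportions.\<close>

lemma brunn_minkowski_mult_boxes_step:
  fixes A B :: "('a::euclidean_space \<times> 'a) set"
  assumes A: "box_packing A" "2 \<le> card A" and B: "box_packing B" and l: "0 < l" "l < 1"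
    and IH: "\<And>A' B' :: ('a \<times> 'a) set. box_packing A' \<Longrightarrow> box_packing B' \<Longrightarrow>
      card A' < card A \<Longrightarrow> card B' \<le> card B \<Longrightarrow>
      measure lebesgue (boxes_union A') powr l * measure lebesgue (boxes_union B') powr (1 - l)
      \<le> measure lebesgue (minkowski_comb l (boxes_union A') (boxes_union B'))"
  shows "measure lebesgue (boxes_union A) powr l * measure lebesgue (boxes_union B) powr (1 - l)
    \<le> measure lebesgue (minkowski_comb l (boxes_union A) (boxes_union B))"
proof -
  have finA: "finite A" and finB: "finite B" using A B by (simp_all add: box_packing_finite)
  obtain k c where k: "k \<in> Basis"
    and A1: "box_packing (boxes_below k c A)" "card (boxes_below k c A) < card A"
    and A2: "box_packing (boxes_above k c A)" "card (boxes_above k c A) < card A"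
    using box_packing_split[OF A] by blast
  define a a1 a2 b where "a = measure lebesgue (boxes_union A)"
    and "a1 = measure lebesgue (boxes_union (boxes_below k c A))"
    and "a2 = measure lebesgue (boxes_union (boxes_above k c A))"
    and "b = measure lebesgue (boxes_union B)"
  have a12: "a = a1 + a2"
    unfolding a_def a1_def a2_def by (rule measure_boxes_union_split[OF k finA])
  have "0 < a1" "0 < a2" "0 < b"
    unfolding a1_def a2_def b_def using A1 A2 B by (simp_all add: measure_boxes_union_pos)
  define \<theta> where "\<theta> = a1 / a"
  have \<theta>: "0 < \<theta>" "\<theta> < 1" and a1: "a1 = \<theta> * a" and a2: "a2 = (1 - \<theta>) * a"
    using \<open>0 < a1\<close> \<open>0 < a2\<close> a12 by (auto simp: \<theta>_def field_simps)
  obtain d where d: "measure lebesgue (boxes_union B \<inter> {x. x \<bullet> k \<le> d}) = \<theta> * b"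
    using measure_Int_halfspace_eq_fraction[OF compact_boxes_union[OF finB] k, of \<theta>] \<theta>
    by (auto simp: b_def)
  define B1 B2 where "B1 = boxes_below k d B" and "B2 = boxes_above k d B"
  have b1: "measure lebesgue (boxes_union B1) = \<theta> * b"
    unfolding B1_def measure_boxes_union_below[OF k finB] d ..
  moreover have b2: "measure lebesgue (boxes_union B2) = (1 - \<theta>) * b"
    using measure_boxes_union_split[OF k finB, of d] b1 unfolding B1_def B2_def b_def
    by (simp add: algebra_simps)
  ultimately have "B1 \<noteq> {}" "B2 \<noteq> {}"
    using \<theta> \<open>0 < b\<close> by auto
  then have B12: "box_packing B1" "box_packing B2"
    unfolding B1_def B2_def using box_packing_below box_packing_above B k by blast+
  have "card B1 \<le> card B" "card B2 \<le> card B"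
    unfolding B1_def B2_def using finB by (simp_all add: card_boxes_below_le card_boxes_above_le)
  have "0 \<le> a" using a12 \<open>0 < a1\<close> \<open>0 < a2\<close> by simp
  have "\<theta> * (a powr l * b powr (1 - l)) = (\<theta> * a) powr l * (\<theta> * b) powr (1 - l)"
    using \<theta> \<open>0 \<le> a\<close> \<open>0 < b\<close> by (simp add: powr_scale_mult_powr_scale)
  also have "\<dots> \<le> measure lebesgue (minkowski_comb l (boxes_union (boxes_below k c A)) (boxes_union B1))"
    using IH[OF A1(1) B12(1) A1(2) \<open>card B1 \<le> card B\<close>] by (simp only: b1 a1_def[symmetric] a1)
  finally have "\<theta> * (a powr l * b powr (1 - l))
      \<le> measure lebesgue (minkowski_comb l (boxes_union (boxes_below k c A)) (boxes_union B1))" .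
  moreover have "(1 - \<theta>) * (a powr l * b powr (1 - l)) = ((1 - \<theta>) * a) powr l * ((1 - \<theta>) * b) powr (1 - l)"
    using \<theta> \<open>0 \<le> a\<close> \<open>0 < b\<close> by (simp add: powr_scale_mult_powr_scale)
  moreover have "\<dots> \<le> measure lebesgue (minkowski_comb l (boxes_union (boxes_above k c A)) (boxes_union B2))"
    using IH[OF A2(1) B12(2) A2(2) \<open>card B2 \<le> card B\<close>] by (simp only: b2 a2_def[symmetric] a2)
  moreover have "measure lebesgue (minkowski_comb l (boxes_union (boxes_below k c A)) (boxes_union B1))
      + measure lebesgue (minkowski_comb l (boxes_union (boxes_above k c A)) (boxes_union B2))
      \<le> measure lebesgue (minkowski_comb l (boxes_union A) (boxes_union B))"
    unfolding B1_def B2_def using k finA finB l by (intro measure_minkowski_comb_boxes_split) auto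
  ultimately show ?thesis
    unfolding a_def b_def by (simp add: algebra_simps)
qed

lemma brunn_minkowski_mult_boxes:
  fixes A B :: "('a::euclidean_space \<times> 'a) set"
  assumes "box_packing A" "box_packing B" "0 < l" "l < 1"
  shows "measure lebesgue (boxes_union A) powr l * measure lebesgue (boxes_union B) powr (1 - l)
    \<le> measure lebesgue (minkowski_comb l (boxes_union A) (boxes_union B))"
  using assms
proof (induction "card A + card B" arbitrary: A B l rule: less_induct)
  case less
  have "1 \<le> card A" "1 \<le> card B"
    using less.prems by (simp_all add: box_packing_def Suc_le_eq card_gt_0_iff)
  then consider "2 \<le> card A" | "2 \<le> card B" | "card A = 1" "card B = 1"
    by linarith
  then show ?case
  proof cases
    case 1
    show ?thesis
      by (rule brunn_minkowski_mult_boxes_step[OF less.prems(1) 1 less.prems(2-4)])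
         (rule less.hyps, auto simp: less.prems)
  next
    case 2
    \<comment> \<open>Exchange the roles of \<open>A\<close> and \<open>B\<close>, with weight \<open>1 - l\<close>.\<close>
    have "measure lebesgue (boxes_union B) powr (1 - l) * measure lebesgue (boxes_union A) powr (1 - (1 - l))
        \<le> measure lebesgue (minkowski_comb (1 - l) (boxes_union B) (boxes_union A))"
    proof (rule brunn_minkowski_mult_boxes_step[OF less.prems(2) 2 less.prems(1)])
      fix A' B' :: "('a \<times> 'a) set"
      assume "box_packing A'" "box_packing B'" "card A' < card B" "card B' \<le> card A"
      then have "measure lebesgue (boxes_union B') powr l * measure lebesgue (boxes_union A') powr (1 - l)
          \<le> measure lebesgue (minkowski_comb l (boxes_union B') (boxes_union A'))"
        using less.prems by (intro less.hyps) auto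
      then show "measure lebesgue (boxes_union A') powr (1 - l) * measure lebesgue (boxes_union B') powr (1 - (1 - l))
          \<le> measure lebesgue (minkowski_comb (1 - l) (boxes_union A') (boxes_union B'))"
        by (simp add: minkowski_comb_commute[of l "boxes_union B'"] mult.commute)
    qed (use less.prems in auto)
    then show ?thesis by (simp add: minkowski_comb_commute[of l "boxes_union A"] mult.commute)
  next
    case 3
    then obtain pa pb where "A = {pa}" "B = {pb}" by (metis card_1_singletonE)
    with less.prems show ?thesis
      using brunn_minkowski_mult_cbox[of "fst pa" "snd pa" "fst pb" "snd pb" l]
      by (auto simp: box_packing_def boxes_union_def less_imp_le)
  qed
qed

section \<open>Brunn--Minkowski for compact sets\<close>

definition grid_box :: "real \<Rightarrow> ('a::euclidean_space \<Rightarrow> int) \<Rightarrow> 'a \<times> 'a" where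
  "grid_box h z = (\<Sum>i\<in>Basis. (h * of_int (z i)) *\<^sub>R i, \<Sum>i\<in>Basis. (h * (of_int (z i) + 1)) *\<^sub>R i)"

definition grid_index :: "real \<Rightarrow> 'a::euclidean_space \<Rightarrow> 'a \<Rightarrow> int" where
  "grid_index h x = restrict (\<lambda>i. \<lfloor>x \<bullet> i / h\<rfloor>) Basis"

lemma grid_box_inner:
  assumes "i \<in> Basis"
  shows "fst (grid_box h z) \<bullet> i = h * of_int (z i)" "snd (grid_box h z) \<bullet> i = h * (of_int (z i) + 1)"
  using assms by (simp_all add: grid_box_def inner_sum_Basis_coord)

lemma mem_grid_box_grid_index:
  assumes "0 < h"
  shows "x \<in> cbox (fst (grid_box h (grid_index h x))) (snd (grid_box h (grid_index h x)))"
  unfolding mem_box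
proof
  fix i :: 'a assume i: "i \<in> Basis"
  have "of_int \<lfloor>x \<bullet> i / h\<rfloor> * h \<le> x \<bullet> i" "x \<bullet> i \<le> (of_int \<lfloor>x \<bullet> i / h\<rfloor> + 1) * h"
    using floor_divide_lower[OF assms] floor_divide_upper[OF assms] less_imp_le by blast+
  then show "fst (grid_box h (grid_index h x)) \<bullet> i \<le> x \<bullet> i \<and> x \<bullet> i \<le> snd (grid_box h (grid_index h x)) \<bullet> i"
    using i by (simp add: grid_box_inner grid_index_def mult.commute)
qed

lemma box_packing_grid_boxes:
  fixes Z :: "('a::euclidean_space \<Rightarrow> int) set"
  assumes h: "0 < h" and Z: "finite Z" "Z \<noteq> {}" "Z \<subseteq> extensional Basis"
  shows "box_packing (grid_box h ` Z)"
  unfolding box_packing_def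
proof (intro conjI ballI impI)
  show "finite (grid_box h ` Z)" "grid_box h ` Z \<noteq> {}" using Z by auto
next
  fix p i assume "p \<in> grid_box h ` Z" "i \<in> (Basis::'a set)"
  then show "fst p \<bullet> i < snd p \<bullet> i" using h by (auto simp: grid_box_inner)
next
  fix p q assume "p \<in> grid_box h ` Z" "q \<in> grid_box h ` Z" "p \<noteq> q"
  then obtain z z' where z: "z \<in> Z" "z' \<in> Z" "p = grid_box h z" "q = grid_box h z'" "z \<noteq> z'"
    by auto
  then obtain i where i: "i \<in> Basis" "z i \<noteq> z' i"
    using Z(3) extensionalityI[of z Basis z'] by blast
  then have "z i + 1 \<le> z' i \<or> z' i + 1 \<le> z i" by linarith
  then have "of_int (z i) + 1 \<le> (of_int (z' i) :: real) \<or> of_int (z' i) + 1 \<le> (of_int (z i) :: real)"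
    by (metis of_int_1 of_int_add of_int_le_iff)
  then show "\<exists>i\<in>Basis. snd p \<bullet> i \<le> fst q \<bullet> i \<or> snd q \<bullet> i \<le> fst p \<bullet> i"
    using h i(1) z by (auto simp: grid_box_inner)
qed

lemma dist_le_in_grid_box:
  fixes x y :: "'a::euclidean_space" and h :: real
  assumes x: "x \<in> cbox (fst (grid_box h z)) (snd (grid_box h z))"
    and y: "y \<in> cbox (fst (grid_box h z)) (snd (grid_box h z))"
  shows "dist x y \<le> DIM('a) * h"
proof -
  have "\<bar>(x - y) \<bullet> i\<bar> \<le> h" if "i \<in> Basis" for i
    using x[unfolded mem_box, rule_format, OF that] y[unfolded mem_box, rule_format, OF that] that
    by (auto simp: grid_box_inner inner_diff_left abs_le_iff distrib_left)
  then have "(\<Sum>i\<in>Basis. \<bar>(x - y) \<bullet> i\<bar>) \<le> (\<Sum>i\<in>(Basis::'a set). h)"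
    by (intro sum_mono) auto
  then show ?thesis
    using norm_le_l1[of "x - y"] by (simp add: dist_norm)
qed

lemma finite_grid_index_image:
  fixes A :: "'a::euclidean_space set"
  assumes h: "0 < h" and A: "bounded A"
  shows "finite (grid_index h ` A)"
proof -
  obtain r where r: "\<forall>x\<in>A. norm x \<le> r"
    using A unfolding bounded_iff by blast
  define N where "N = \<lceil>r / h\<rceil>"
  have "grid_index h ` A \<subseteq> Basis \<rightarrow>\<^sub>E {- N..N}"
  proof safe
    fix x i assume x: "x \<in> A" and i: "i \<in> (Basis::'a set)"
    have "\<bar>x \<bullet> i\<bar> \<le> r" using r x Basis_le_norm[OF i, of x] by fastforce
    then have "- (r / h) \<le> x \<bullet> i / h" "x \<bullet> i / h \<le> r / h"
      using h by (auto simp: field_simps abs_le_iff)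
    moreover have "r / h \<le> of_int N" unfolding N_def by (rule le_of_int_ceiling)
    ultimately have "- N \<le> \<lfloor>x \<bullet> i / h\<rfloor>" "\<lfloor>x \<bullet> i / h\<rfloor> \<le> N"
      by (simp_all add: le_floor_iff floor_le_iff)
    then show "grid_index h x i \<in> {- N..N}" using i by (simp add: grid_index_def)
  qed (simp add: grid_index_def)
  then show ?thesis by (rule finite_subset) (simp add: finite_PiE)
qed

lemma grid_box_packing_cover:
  fixes A :: "'a::euclidean_space set"
  assumes A: "compact A" "A \<noteq> {}" and \<delta>: "0 < \<delta>"
  obtains C where "box_packing C" "A \<subseteq> boxes_union C"
    "\<And>x. x \<in> boxes_union C \<Longrightarrow> \<exists>a\<in>A. dist x a \<le> \<delta>"
proof
  define h where "h = \<delta> / DIM('a)"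
  have h: "0 < h" using \<delta> by (simp add: h_def)
  show "box_packing (grid_box h ` grid_index h ` A)"
    using A h by (intro box_packing_grid_boxes finite_grid_index_image compact_imp_bounded)
      (auto simp: grid_index_def)
  show "A \<subseteq> boxes_union (grid_box h ` grid_index h ` A)"
    using mem_grid_box_grid_index[OF h] by (force simp: boxes_union_def)
  fix x assume "x \<in> boxes_union (grid_box h ` grid_index h ` A)"
  then obtain a where "a \<in> A" and x: "x \<in> cbox (fst (grid_box h (grid_index h a))) (snd (grid_box h (grid_index h a)))"
    by (auto simp: boxes_union_def)
  then have "dist x a \<le> DIM('a) * h"
    using dist_le_in_grid_box[OF x mem_grid_box_grid_index[OF h]] by blast
  then show "\<exists>a\<in>A. dist x a \<le> \<delta>" using \<open>a \<in> A\<close> by (auto simp: h_def)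
qed

lemma compact_closed_neighbourhood:
  fixes M :: "'a::euclidean_space set"
  assumes "compact M"
  shows "compact {x. \<exists>m\<in>M. dist x m \<le> e}"
proof -
  have "{x. \<exists>m\<in>M. dist x m \<le> e} = (\<lambda>p. fst p + snd p) ` (M \<times> cball 0 e)"
  proof (intro set_eqI iffI)
    fix x assume "x \<in> {x. \<exists>m\<in>M. dist x m \<le> e}"
    then obtain m where "m \<in> M" "dist x m \<le> e" by blast
    then have "(m, x - m) \<in> M \<times> cball 0 e" by (simp add: dist_norm norm_minus_commute)
    then show "x \<in> (\<lambda>p. fst p + snd p) ` (M \<times> cball 0 e)" by force
  qed (force simp: dist_norm)
  moreover have "compact ((\<lambda>p. fst p + snd p) ` (M \<times> cball 0 e))"
    using assms by (intro compact_continuous_image continuous_intros compact_Times compact_cball)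
  ultimately show ?thesis by simp
qed

lemma measure_closed_neighbourhoods_tendsto:
  fixes M :: "'a::euclidean_space set"
  assumes M: "compact M"
  shows "(\<lambda>n. measure lebesgue {x. \<exists>m\<in>M. dist x m \<le> 1 / Suc n}) \<longlonglongrightarrow> measure lebesgue M"
proof -
  define T where "T n = {x. \<exists>m\<in>M. dist x m \<le> 1 / Suc n}" for n :: nat
  have "decseq T"
  proof (intro decseq_SucI subsetI)
    fix n x assume "x \<in> T (Suc n)"
    moreover have "1 / real (Suc (Suc n)) \<le> 1 / real (Suc n)" by (simp add: frac_le)
    ultimately show "x \<in> T n" unfolding T_def by (force intro: order_trans)
  qed
  moreover have "(\<Inter>n. T n) = M"
  proof
    show "(\<Inter>n. T n) \<subseteq> M"
    proof
      fix x assume x: "x \<in> (\<Inter>n. T n)"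
      have "x \<in> closure M"
        unfolding closure_approachable
      proof (intro allI impI)
        fix e :: real assume "0 < e"
        then obtain n where n: "inverse (real (Suc n)) < e" using reals_Archimedean by blast
        obtain m where "m \<in> M" "dist x m \<le> 1 / Suc n" using x by (auto simp: T_def)
        with n show "\<exists>y\<in>M. dist y x < e" by (force simp: dist_commute inverse_eq_divide)
      qed
      then show "x \<in> M" using M by (simp add: compact_imp_closed closure_closed)
    qed
  qed (force simp: T_def)
  ultimately have "(\<lambda>n. measure lebesgue (T n)) \<longlonglongrightarrow> measure lebesgue (\<Inter>n. T n)"
    using compact_closed_neighbourhood[OF M, of "1 / Suc _", folded T_def]
    by (intro Lim_measure_decseq) (auto intro!: fmeasurableD2 fmeasurableD lmeasurable_compact)
  then show ?thesis using \<open>(\<Inter>n. T n) = M\<close> by (simp add: T_def)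
qed

theorem brunn_minkowski_mult:
  fixes A B :: "'a::euclidean_space set"
  assumes A: "compact A" and B: "compact B" and l: "0 < l" "l < 1"
  shows "measure lebesgue A powr l * measure lebesgue B powr (1 - l) \<le> measure lebesgue (minkowski_comb l A B)"
proof (cases "A = {} \<or> B = {}")
  case True
  then show ?thesis using l by (auto simp: measure_nonneg)
next
  case False
  define N where "N e = {x. \<exists>m\<in>minkowski_comb l A B. dist x m \<le> e}" for e
  have "measure lebesgue A powr l * measure lebesgue B powr (1 - l) \<le> measure lebesgue (N \<delta>)"
    if \<delta>: "0 < \<delta>" for \<delta>
  proof -
    obtain CA where CA: "box_packing CA" "A \<subseteq> boxes_union CA"
      "\<And>x. x \<in> boxes_union CA \<Longrightarrow> \<exists>a\<in>A. dist x a \<le> \<delta>"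
      using grid_box_packing_cover[OF A _ \<delta>] False by blast
    obtain CB where CB: "box_packing CB" "B \<subseteq> boxes_union CB"
      "\<And>x. x \<in> boxes_union CB \<Longrightarrow> \<exists>b\<in>B. dist x b \<le> \<delta>"
      using grid_box_packing_cover[OF B _ \<delta>] False by blast
    have cU: "compact (boxes_union CA)" "compact (boxes_union CB)"
      using CA CB by (simp_all add: compact_boxes_union box_packing_finite)
    have "measure lebesgue A powr l * measure lebesgue B powr (1 - l)
        \<le> measure lebesgue (boxes_union CA) powr l * measure lebesgue (boxes_union CB) powr (1 - l)"
      using l CA(2) CB(2) A B cU
      by (intro mult_mono powr_mono2 measure_mono_compact) (auto simp: measure_nonneg)
    also have "\<dots> \<le> measure lebesgue (minkowski_comb l (boxes_union CA) (boxes_union CB))"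
      by (rule brunn_minkowski_mult_boxes[OF CA(1) CB(1) l])
    also have "\<dots> \<le> measure lebesgue (N \<delta>)"
    proof (intro measure_mono_compact compact_minkowski_comb cU)
      show "compact (N \<delta>)"
        unfolding N_def by (intro compact_closed_neighbourhood compact_minkowski_comb A B)
      have "minkowski_comb l (boxes_union CA) (boxes_union CB)
          \<subseteq> minkowski_comb l {x. \<exists>a\<in>A. dist x a \<le> \<delta>} {x. \<exists>b\<in>B. dist x b \<le> \<delta>}"
        using CA(3) CB(3) by (intro minkowski_comb_mono) auto
      also have "\<dots> \<subseteq> N \<delta>"
        unfolding N_def using l by (intro minkowski_comb_neighbourhoods_subset) auto
      finally show "minkowski_comb l (boxes_union CA) (boxes_union CB) \<subseteq> N \<delta>" .
    qed
    finally show ?thesis .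
  qed
  then show ?thesis
    using measure_closed_neighbourhoods_tendsto[OF compact_minkowski_comb[OF A B, of l]]
    by (intro LIMSEQ_le_const) (auto simp: N_def)
qed

lemma powr_inverse_power:
  fixes x :: real
  shows "0 \<le> x \<Longrightarrow> 0 < n \<Longrightarrow> (x powr (1 / real n)) ^ n = x"
  by (simp add: root_powr_inverse[symmetric])

lemma power_powr_inverse:
  fixes x :: real
  shows "0 \<le> x \<Longrightarrow> 0 < n \<Longrightarrow> (x ^ n) powr (1 / real n) = x"
  by (simp add: root_powr_inverse[symmetric] real_root_power_cancel)

lemma measure_scaleR_image:
  fixes S :: "'a::euclidean_space set"
  shows "measure lebesgue ((\<lambda>x. c *\<^sub>R x) ` S) = \<bar>c\<bar> ^ DIM('a) * measure lebesgue S"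
  using measure_lebesgue_affine[of c 0 S] by simp

lemma measure_minkowski_comb_ge_point:
  fixes A B :: "'a::euclidean_space set"
  assumes A: "compact A" "p \<in> A" and B: "compact B" and l: "l \<le> 1"
  shows "(1 - l) ^ DIM('a) * measure lebesgue B \<le> measure lebesgue (minkowski_comb l A B)"
proof -
  have "(1 - l) ^ DIM('a) * measure lebesgue B = measure lebesgue ((\<lambda>x. (1 - l) *\<^sub>R x + l *\<^sub>R p) ` B)"
    using l by (simp add: measure_lebesgue_affine)
  also have "\<dots> \<le> measure lebesgue (minkowski_comb l A B)"
  proof (intro measure_mono_compact compact_minkowski_comb A B compact_continuous_image continuous_intros)
    show "(\<lambda>x. (1 - l) *\<^sub>R x + l *\<^sub>R p) ` B \<subseteq> minkowski_comb l A B"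
      using A by (force simp: minkowski_comb_iff add.commute)
  qed
  finally show ?thesis .
qed

lemma minkowski_comb_normalized_subset:
  assumes x: "0 < x" and y: "0 < y" and s: "s = l * x + (1 - l) * y" "0 < s"
  shows "minkowski_comb (l * x / s) ((\<lambda>v. (1 / x) *\<^sub>R v) ` A) ((\<lambda>v. (1 / y) *\<^sub>R v) ` B)
    \<subseteq> (\<lambda>v. (1 / s) *\<^sub>R v) ` minkowski_comb l A B"
proof
  fix w assume "w \<in> minkowski_comb (l * x / s) ((\<lambda>v. (1 / x) *\<^sub>R v) ` A) ((\<lambda>v. (1 / y) *\<^sub>R v) ` B)"
  then obtain a b where ab: "a \<in> A" "b \<in> B"
    and w: "w = (l * x / s) *\<^sub>R ((1 / x) *\<^sub>R a) + (1 - l * x / s) *\<^sub>R ((1 / y) *\<^sub>R b)"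
    unfolding minkowski_comb_iff by blast
  have "1 - l * x / s = (1 - l) * y / s"
    using s by (simp add: field_simps)
  then have "(1 - l * x / s) * (1 / y) = (1 - l) / s"
    using y by simp
  moreover have "l * x / s * (1 / x) = l / s"
    using x by simp
  ultimately have "w = (1 / s) *\<^sub>R (l *\<^sub>R a + (1 - l) *\<^sub>R b)"
    by (simp add: w scaleR_add_right)
  moreover have "l *\<^sub>R a + (1 - l) *\<^sub>R b \<in> minkowski_comb l A B"
    using ab by (auto simp: minkowski_comb_iff)
  ultimately show "w \<in> (\<lambda>v. (1 / s) *\<^sub>R v) ` minkowski_comb l A B"
    by blast
qed

lemma brunn_minkowski_roots:
  fixes A B :: "'a::euclidean_space set"
  assumes A: "compact A" and B: "compact B" and l: "0 < l" "l < 1"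
    and x: "0 < x" "x ^ DIM('a) = measure lebesgue A" and y: "0 < y" "y ^ DIM('a) = measure lebesgue B"
  shows "(l * x + (1 - l) * y) ^ DIM('a) \<le> measure lebesgue (minkowski_comb l A B)"
proof -
  define s where "s = l * x + (1 - l) * y"
  have "0 < s" using x y l by (simp add: s_def add_pos_pos)
  have "l * x / s < 1" "0 < l * x / s"
    using x y l \<open>0 < s\<close> by (simp_all add: s_def field_simps)
  have unit: "measure lebesgue ((\<lambda>v. (1 / x) *\<^sub>R v) ` A) = 1"
    "measure lebesgue ((\<lambda>v. (1 / y) *\<^sub>R v) ` B) = 1"
    using x y by (simp_all add: measure_scaleR_image power_divide x(2)[symmetric] y(2)[symmetric])
  have "1 \<le> measure lebesgue
      (minkowski_comb (l * x / s) ((\<lambda>v. (1 / x) *\<^sub>R v) ` A) ((\<lambda>v. (1 / y) *\<^sub>R v) ` B))"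
    using brunn_minkowski_mult[of "(\<lambda>v. (1 / x) *\<^sub>R v) ` A" "(\<lambda>v. (1 / y) *\<^sub>R v) ` B" "l * x / s"]
      \<open>l * x / s < 1\<close> \<open>0 < l * x / s\<close> A B
    by (simp add: unit compact_scaling)
  also have "\<dots> \<le> measure lebesgue ((\<lambda>v. (1 / s) *\<^sub>R v) ` minkowski_comb l A B)"
    using x y \<open>0 < s\<close>
    by (intro measure_mono_compact minkowski_comb_normalized_subset compact_minkowski_comb
        compact_scaling A B) (simp_all add: s_def)
  also have "\<dots> = measure lebesgue (minkowski_comb l A B) / s ^ DIM('a)"
    using \<open>0 < s\<close> by (simp add: measure_scaleR_image power_divide)
  finally show ?thesis
    using \<open>0 < s\<close> by (simp add: s_def field_simps)
qed

theorem brunn_minkowski: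
  fixes A B :: "'a::euclidean_space set"
  assumes A: "compact A" "A \<noteq> {}" and B: "compact B" "B \<noteq> {}" and l: "0 < l" "l < 1"
  shows "(l * measure lebesgue A powr (1 / DIM('a)) + (1 - l) * measure lebesgue B powr (1 / DIM('a))) ^ DIM('a)
    \<le> measure lebesgue (minkowski_comb l A B)"
proof -
  define n where "n = DIM('a)"
  define x y where "x = measure lebesgue A powr (1 / n)" and "y = measure lebesgue B powr (1 / n)"
  have "0 < n" by (simp add: n_def)
  have mA: "x ^ n = measure lebesgue A" and mB: "y ^ n = measure lebesgue B"
    using \<open>0 < n\<close> by (simp_all add: x_def y_def powr_inverse_power measure_nonneg)
  consider "x = 0" | "y = 0" | "0 < x" "0 < y"
    by (fastforce simp: x_def y_def)
  then have "(l * x + (1 - l) * y) ^ n \<le> measure lebesgue (minkowski_comb l A B)"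
  proof cases
    case 1
    with A(2) obtain p where "p \<in> A" by blast
    then show ?thesis
      using measure_minkowski_comb_ge_point[OF A(1) _ B(1), of p l] 1 l mB
      by (simp add: n_def power_mult_distrib)
  next
    case 2
    with B(2) obtain q where "q \<in> B" by blast
    then show ?thesis
      using measure_minkowski_comb_ge_point[OF B(1) _ A(1), of q "1 - l"] 2 l mA
      by (simp add: n_def power_mult_distrib minkowski_comb_commute[of l A])
  next
    case 3
    then show ?thesis
      using brunn_minkowski_roots[OF A(1) B(1) l] mA mB by (simp add: n_def)
  qed
  then show ?thesis by (simp add: x_def y_def n_def)
qed

section \<open>Hyperplane volume via prisms\<close>

lemma additive_mono_imp_linear:
  fixes \<mu> :: "real \<Rightarrow> real"
  assumes add: "\<And>h k. 0 \<le> h \<Longrightarrow> 0 \<le> k \<Longrightarrow> \<mu> (h + k) = \<mu> h + \<mu> k"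
    and mono: "\<And>h k. 0 \<le> h \<Longrightarrow> h \<le> k \<Longrightarrow> \<mu> h \<le> \<mu> k"
    and h: "0 \<le> h"
  shows "\<mu> h = h * \<mu> 1"
proof -
  have "\<mu> 0 = 0" using add[of 0 0] by simp
  have mult: "\<mu> (real j * x) = real j * \<mu> x" if "0 \<le> x" for j x
  proof (induction j)
    case (Suc j)
    have "\<mu> (real (Suc j) * x) = \<mu> (real j * x + x)" by (simp add: algebra_simps)
    also have "\<dots> = \<mu> (real j * x) + \<mu> x" using that by (intro add) auto
    finally show ?case using Suc by (simp add: algebra_simps)
  qed (simp add: \<open>\<mu> 0 = 0\<close>)
  have "0 \<le> \<mu> 1" using mono[of 0 1] \<open>\<mu> 0 = 0\<close> by simp
  \<comment> \<open>Squeeze \<open>h\<close> between consecutive multiples of \<open>1 / N\<close>.\<close>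
  have bound: "\<bar>\<mu> h - h * \<mu> 1\<bar> \<le> \<mu> 1 / real N" if N: "0 < N" for N :: nat
  proof -
    have unit: "\<mu> (1 / real N) = \<mu> 1 / real N"
      using mult[of "1 / real N" N] N by (simp add: field_simps)
    define j where "j = nat \<lfloor>real N * h\<rfloor>"
    have "real j \<le> real N * h" "real N * h < real j + 1" using h by (simp_all add: j_def)
    then have jh: "real j * (1 / real N) \<le> h" "h \<le> real (Suc j) * (1 / real N)"
      using N by (simp_all add: field_simps)
    have "real j * (\<mu> 1 / real N) \<le> \<mu> h" "\<mu> h \<le> real (Suc j) * (\<mu> 1 / real N)"
      using mono[OF _ jh(1)] mono[OF h jh(2)] mult[of "1 / real N" j] mult[of "1 / real N" "Suc j"]
      by (simp_all add: unit)
    moreover have "real j * (\<mu> 1 / real N) \<le> h * \<mu> 1" "h * \<mu> 1 \<le> real (Suc j) * (\<mu> 1 / real N)"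
      using mult_right_mono[OF jh(1) \<open>0 \<le> \<mu> 1\<close>] mult_right_mono[OF jh(2) \<open>0 \<le> \<mu> 1\<close>] by simp_all
    moreover have "real (Suc j) * (\<mu> 1 / real N) - real j * (\<mu> 1 / real N) = \<mu> 1 / real N"
      by (simp add: algebra_simps add_divide_distrib)
    ultimately show ?thesis by linarith
  qed
  show ?thesis
  proof (rule ccontr)
    assume "\<mu> h \<noteq> h * \<mu> 1"
    then have d: "0 < \<bar>\<mu> h - h * \<mu> 1\<bar>" by simp
    obtain N :: nat where N: "\<mu> 1 / \<bar>\<mu> h - h * \<mu> 1\<bar> < real N"
      using reals_Archimedean2 by blast
    moreover have "0 \<le> \<mu> 1 / \<bar>\<mu> h - h * \<mu> 1\<bar>" using \<open>0 \<le> \<mu> 1\<close> by simp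
    ultimately have "0 < N" by linarith
    with bound[OF this] N d show False by (simp add: field_simps)
  qed
qed

definition prism :: "'a::euclidean_space \<Rightarrow> real \<Rightarrow> 'a set \<Rightarrow> 'a set" where
  "prism v h A = (\<lambda>p. fst p + snd p *\<^sub>R v) ` (A \<times> {0..h})"

lemma hvol_eq_measure_prism: "hvol v A = measure lebesgue (prism v 1 A)"
  unfolding hvol_def prism_def by (simp add: case_prod_beta')

lemma mem_prism_iff: "x \<in> prism v h A \<longleftrightarrow> (\<exists>a\<in>A. \<exists>s. 0 \<le> s \<and> s \<le> h \<and> x = a + s *\<^sub>R v)"
  unfolding prism_def by force

lemma compact_prism: "compact A \<Longrightarrow> compact (prism v h A)"
  unfolding prism_def by (intro compact_continuous_image continuous_intros compact_Times compact_Icc)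

lemma prism_mono: "A \<subseteq> B \<Longrightarrow> h \<le> k \<Longrightarrow> prism v h A \<subseteq> prism v k B"
  unfolding prism_def by (intro image_mono Sigma_mono) auto

lemma measure_prism_mono:
  "compact A \<Longrightarrow> compact B \<Longrightarrow> A \<subseteq> B \<Longrightarrow> h \<le> k
    \<Longrightarrow> measure lebesgue (prism v h A) \<le> measure lebesgue (prism v k B)"
  by (intro measure_mono_compact prism_mono compact_prism)

lemma prism_add_eq_Un:
  assumes "0 \<le> h" "0 \<le> k"
  shows "prism v (h + k) A = prism v h A \<union> (+) (h *\<^sub>R v) ` prism v k A"
proof (intro set_eqI iffI)
  fix x assume "x \<in> prism v (h + k) A"
  then obtain a s where a: "a \<in> A" "0 \<le> s" "s \<le> h + k" "x = a + s *\<^sub>R v"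
    unfolding mem_prism_iff by auto
  show "x \<in> prism v h A \<union> (+) (h *\<^sub>R v) ` prism v k A"
  proof (cases "s \<le> h")
    case False
    then have "a + (s - h) *\<^sub>R v \<in> prism v k A"
      unfolding mem_prism_iff using a by (intro bexI[OF _ a(1)] exI[of _ "s - h"]) auto
    moreover have "x = h *\<^sub>R v + (a + (s - h) *\<^sub>R v)" using a(4) by (simp add: algebra_simps)
    ultimately show ?thesis by blast
  qed (use a in \<open>auto simp: mem_prism_iff\<close>)
next
  fix x assume "x \<in> prism v h A \<union> (+) (h *\<^sub>R v) ` prism v k A"
  then show "x \<in> prism v (h + k) A"
  proof
    assume "x \<in> (+) (h *\<^sub>R v) ` prism v k A"
    then obtain y where y: "y \<in> prism v k A" "x = h *\<^sub>R v + y" by blast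
    then obtain a s where a: "a \<in> A" "0 \<le> s" "s \<le> k" "y = a + s *\<^sub>R v"
      unfolding mem_prism_iff by blast
    then have "x = a + (h + s) *\<^sub>R v" using y(2) by (simp add: algebra_simps)
    then show ?thesis
      unfolding mem_prism_iff using a assms by (intro bexI[OF _ a(1)] exI[of _ "h + s"]) auto
  qed (use prism_mono[of A A h "h + k" v] assms in auto)
qed

lemma measure_prism_add:
  fixes v :: "'a::euclidean_space"
  assumes v: "norm v = 1" and A: "compact A" "A \<subseteq> {x. v \<bullet> x = t}" and h: "0 \<le> h" "0 \<le> k"
  shows "measure lebesgue (prism v (h + k) A) = measure lebesgue (prism v h A) + measure lebesgue (prism v k A)"
proof -
  have vx: "v \<bullet> (a + s *\<^sub>R v) = t + s" if "a \<in> A" for a s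
    using that A(2) v by (auto simp: inner_simps dot_square_norm)
  \<comment> \<open>The two pieces meet only in the hyperplane at height \<open>t + h\<close>.\<close>
  have "prism v h A \<inter> (+) (h *\<^sub>R v) ` prism v k A \<subseteq> {x. v \<bullet> x = t + h}"
  proof
    fix x assume x: "x \<in> prism v h A \<inter> (+) (h *\<^sub>R v) ` prism v k A"
    then have "x \<in> prism v h A" by blast
    then obtain a s where a: "a \<in> A" "s \<le> h" "x = a + s *\<^sub>R v"
      unfolding mem_prism_iff by blast
    obtain y where y: "y \<in> prism v k A" "x = h *\<^sub>R v + y" using x by blast
    then obtain b s' where b: "b \<in> A" "0 \<le> s'" "y = b + s' *\<^sub>R v"
      unfolding mem_prism_iff by blast
    have "x = b + (h + s') *\<^sub>R v" using y(2) b(3) by (simp add: algebra_simps)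
    then have "t + s = t + (h + s')" using vx[OF a(1), of s] vx[OF b(1), of "h + s'"] a(3) by simp
    then show "x \<in> {x. v \<bullet> x = t + h}" using a b vx[OF a(1), of s] by auto
  qed
  then have "negligible (prism v h A \<inter> (+) (h *\<^sub>R v) ` prism v k A)"
    using v by (intro negligible_subset[OF negligible_hyperplane[of v "t + h"]]) auto
  then show ?thesis
    using measure_translate_add[OF lmeasurable_compact[OF compact_prism[OF A(1)]]
        lmeasurable_compact[OF compact_prism[OF A(1)]] prism_add_eq_Un[OF h, symmetric]]
    by simp
qed

lemma measure_prism:
  fixes v :: "'a::euclidean_space"
  assumes "norm v = 1" "compact A" "A \<subseteq> {x. v \<bullet> x = t}" "0 \<le> h"
  shows "measure lebesgue (prism v h A) = h * hvol v A"
  unfolding hvol_eq_measure_prism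
  using assms
  by (intro additive_mono_imp_linear[of "\<lambda>h. measure lebesgue (prism v h A)"] measure_prism_add
      measure_prism_mono) auto

lemma minkowski_comb_prism_subset:
  assumes "0 \<le> l" "l \<le> 1"
  shows "minkowski_comb l (prism v h A) (prism v k B) \<subseteq> prism v (l * h + (1 - l) * k) (minkowski_comb l A B)"
proof
  fix x assume "x \<in> minkowski_comb l (prism v h A) (prism v k B)"
  then obtain y z where y: "y \<in> prism v h A" and z: "z \<in> prism v k B"
    and xyz: "x = l *\<^sub>R y + (1 - l) *\<^sub>R z"
    unfolding minkowski_comb_iff by blast
  obtain a s b s' where a: "a \<in> A" "0 \<le> s" "s \<le> h" "y = a + s *\<^sub>R v"
    and b: "b \<in> B" "0 \<le> s'" "s' \<le> k" "z = b + s' *\<^sub>R v"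
    using y z unfolding mem_prism_iff by blast
  note x = xyz[unfolded a(4) b(4)]
  have "x = (l *\<^sub>R a + (1 - l) *\<^sub>R b) + (l * s + (1 - l) * s') *\<^sub>R v"
    by (simp add: x algebra_simps)
  moreover have "l *\<^sub>R a + (1 - l) *\<^sub>R b \<in> minkowski_comb l A B"
    using a b by (auto simp: minkowski_comb_iff)
  moreover have "0 \<le> l * s + (1 - l) * s'" "l * s + (1 - l) * s' \<le> l * h + (1 - l) * k"
    using assms a b by (auto intro!: add_mono mult_left_mono)
  ultimately show "x \<in> prism v (l * h + (1 - l) * k) (minkowski_comb l A B)"
    unfolding mem_prism_iff by blast
qed

lemma hvol_nonneg: "0 \<le> hvol v A"
  by (simp add: hvol_def measure_nonneg)

lemma hvol_empty [simp]: "hvol v {} = 0"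
  by (simp add: hvol_def)

lemma hvol_mono:
  fixes A B :: "'a::euclidean_space set"
  shows "compact A \<Longrightarrow> compact B \<Longrightarrow> A \<subseteq> B \<Longrightarrow> hvol v A \<le> hvol v B"
  unfolding hvol_eq_measure_prism by (intro measure_prism_mono) auto

lemma powr_inverse_mult_self:
  fixes a m :: real
  assumes "0 \<le> a" "0 < m"
  shows "(a powr (1 / m) * a) powr (1 / (m + 1)) = a powr (1 / m)"
proof (cases "a = 0")
  case False
  then have "a powr (1 / m) * a = a powr (1 / m + 1)"
    using assms by (simp add: powr_add)
  moreover have "(1 / m + 1) * (1 / (m + 1)) = 1 / m"
    using assms by (simp add: field_simps)
  ultimately show ?thesis by (simp add: powr_powr)
qed simp

theorem hvol_brunn_minkowski:
  fixes v :: "'a::euclidean_space"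
  assumes v: "norm v = 1" and n2: "2 \<le> DIM('a)"
    and A: "compact A" "A \<noteq> {}" "A \<subseteq> {x. v \<bullet> x = tA}"
    and B: "compact B" "B \<noteq> {}" "B \<subseteq> {x. v \<bullet> x = tB}"
    and Z: "compact Z" "Z \<subseteq> {x. v \<bullet> x = tZ}" "minkowski_comb l A B \<subseteq> Z"
    and l: "0 < l" "l < 1"
  shows "l * hvol v A powr (1 / (real DIM('a) - 1)) + (1 - l) * hvol v B powr (1 / (real DIM('a) - 1))
    \<le> hvol v Z powr (1 / (real DIM('a) - 1))"
proof -
  define m where "m = DIM('a) - 1"
  have m: "0 < m" "DIM('a) = Suc m" using n2 by (auto simp: m_def)
  define h k where "h = hvol v A powr (1 / m)" and "k = hvol v B powr (1 / m)"
  define s where "s = l * h + (1 - l) * k"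
  have "0 \<le> h" "0 \<le> k" by (simp_all add: h_def k_def)
  then have "0 \<le> s" using l by (simp add: s_def)
  have mX: "measure lebesgue (prism v h A) = h * hvol v A"
    and mY: "measure lebesgue (prism v k B) = k * hvol v B"
    using measure_prism[OF v A(1,3) \<open>0 \<le> h\<close>] measure_prism[OF v B(1,3) \<open>0 \<le> k\<close>] by simp_all
  have "(h * hvol v A) powr (1 / DIM('a)) = h" "(k * hvol v B) powr (1 / DIM('a)) = k"
    unfolding h_def k_def using powr_inverse_mult_self[OF hvol_nonneg, of "real m"] m
    by (simp_all add: add.commute)
  moreover have "prism v h A \<noteq> {}" "prism v k B \<noteq> {}"
    using A(2) B(2) \<open>0 \<le> h\<close> \<open>0 \<le> k\<close> by (auto simp: prism_def)
  ultimately have "s ^ DIM('a) \<le> measure lebesgue (minkowski_comb l (prism v h A) (prism v k B))"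
    using brunn_minkowski[of "prism v h A" "prism v k B" l] A(1) B(1) l
    by (simp add: s_def compact_prism mX mY)
  also have "\<dots> \<le> measure lebesgue (prism v s Z)"
  proof (intro measure_mono_compact compact_minkowski_comb compact_prism A(1) B(1) Z(1))
    show "minkowski_comb l (prism v h A) (prism v k B) \<subseteq> prism v s Z"
      using minkowski_comb_prism_subset[of l v h A k B] prism_mono[OF Z(3) order_refl, of v s] l
      by (simp add: s_def)
  qed
  also have "\<dots> = s * hvol v Z" by (rule measure_prism[OF v Z(1,2) \<open>0 \<le> s\<close>])
  finally have "s * s ^ m \<le> s * hvol v Z" using m by simp
  then have "s \<le> hvol v Z powr (1 / m)"
    using \<open>0 \<le> s\<close> m powr_mono2[of "1 / m" "s ^ m" "hvol v Z"] power_powr_inverse[of s m]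
    by (cases "s = 0") auto
  then show ?thesis using m by (simp add: s_def h_def k_def)
qed

section \<open>Sections of a set and of its kernel\<close>

lemma kernel_subset: "kernel S \<subseteq> S"
  unfolding kernel_def by auto

lemma convex_comb_mem_of_kernel:
  assumes "k \<in> kernel S" "s \<in> S" "0 \<le> a" "a \<le> 1"
  shows "a *\<^sub>R k + (1 - a) *\<^sub>R s \<in> S"
proof -
  have "a *\<^sub>R k + (1 - a) *\<^sub>R s \<in> closed_segment k s"
    unfolding in_segment using assms by (intro exI[of _ "1 - a"]) auto
  then show ?thesis using assms(1,2) unfolding kernel_def by blast
qed

lemma closed_kernel:
  fixes S :: "'a::real_normed_vector set"
  assumes S: "closed S"
  shows "closed (kernel S)"
proof -
  have "x \<in> kernel S" if x: "x \<in> closure (kernel S)" for x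
  proof -
    have "x \<in> S" using x closure_mono[OF kernel_subset[of S]] S by (simp add: closure_closed subsetD)
    moreover have "closed_segment x y \<subseteq> S" if y: "y \<in> S" for y
    proof
      fix w assume "w \<in> closed_segment x y"
      then obtain u where u: "0 \<le> u" "u \<le> 1" "w = (1 - u) *\<^sub>R x + u *\<^sub>R y"
        unfolding in_segment by blast
      \<comment> \<open>The point at parameter \<open>u\<close> on the segment to \<open>y\<close> depends continuously on the kernel point.\<close>
      have "(\<lambda>z. (1 - u) *\<^sub>R z + u *\<^sub>R y) ` kernel S \<subseteq> S"
        using y u convex_comb_mem_of_kernel[of _ S y "1 - u"] by auto
      then have "(\<lambda>z. (1 - u) *\<^sub>R z + u *\<^sub>R y) ` closure (kernel S) \<subseteq> S"
        by (intro image_closure_subset S) (auto intro!: continuous_intros)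
      then show "w \<in> S" using x u by auto
    qed
    ultimately show ?thesis unfolding kernel_def by blast
  qed
  then have "closure (kernel S) \<subseteq> kernel S" by blast
  then show ?thesis by (simp add: closure_subset_eq)
qed

lemma compact_kernel:
  fixes S :: "'a::real_normed_vector set"
  assumes "compact S"
  shows "compact (kernel S)"
proof -
  have "kernel S = S \<inter> kernel S" using kernel_subset by blast
  then show ?thesis
    using compact_Int_closed[OF assms closed_kernel[OF compact_imp_closed[OF assms]]] by simp
qed

lemma compact_hyperplane_Int: "compact X \<Longrightarrow> compact ({x. v \<bullet> x = t} \<inter> X)"
  by (simp add: Int_commute compact_Int_closed closed_hyperplane)

lemma hyperplane_Int_nonempty_of_supp:
  fixes X :: "'a::euclidean_space set"
  assumes X: "compact X" and t: "t \<in> supp (section_fun v X)"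
  shows "{x. v \<bullet> x = t} \<inter> X \<noteq> {}"
proof -
  have "{t. section_fun v X t \<noteq> 0} \<subseteq> (\<lambda>x. v \<bullet> x) ` X"
  proof
    fix t assume "t \<in> {t. section_fun v X t \<noteq> 0}"
    then have "{x. v \<bullet> x = t} \<inter> X \<noteq> {}" by (auto simp: section_fun_def)
    then show "t \<in> (\<lambda>x. v \<bullet> x) ` X" by auto
  qed
  moreover have "closed ((\<lambda>x. v \<bullet> x) ` X)"
    by (intro compact_imp_closed compact_continuous_image continuous_intros X)
  ultimately have "supp (section_fun v X) \<subseteq> (\<lambda>x. v \<bullet> x) ` X"
    unfolding supp_def by (rule closure_minimal)
  then show ?thesis using t by auto
qed

lemma minkowski_comb_kernel_sections_subset:
  assumes "0 \<le> \<alpha>" "\<alpha> \<le> 1"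
  shows "minkowski_comb \<alpha> ({p. v \<bullet> p = x} \<inter> kernel S) ({p. v \<bullet> p = y} \<inter> S)
    \<subseteq> {p. v \<bullet> p = \<alpha> * x + (1 - \<alpha>) * y} \<inter> S"
  using assms by (auto simp: minkowski_comb_iff inner_simps intro: convex_comb_mem_of_kernel)

lemma section_fun_kernel_brunn_minkowski:
  fixes S :: "'a::euclidean_space set"
  assumes n2: "2 \<le> DIM('a)" and S: "compact S" and v: "norm v = 1"
    and x: "x \<in> supp (section_fun v (kernel S))" and y: "y \<in> supp (section_fun v S)"
    and \<alpha>: "0 \<le> \<alpha>" "\<alpha> \<le> 1"
  shows "\<alpha> * section_fun v (kernel S) x powr (1 / (real DIM('a) - 1))
      + (1 - \<alpha>) * section_fun v S y powr (1 / (real DIM('a) - 1))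
    \<le> section_fun v S (\<alpha> * x + (1 - \<alpha>) * y) powr (1 / (real DIM('a) - 1))"
proof -
  have K: "compact (kernel S)" by (rule compact_kernel[OF S])
  consider "\<alpha> = 0" | "\<alpha> = 1" | "0 < \<alpha>" "\<alpha> < 1" using \<alpha> by linarith
  then show ?thesis
  proof cases
    case 2
    then show ?thesis
      using kernel_subset[of S]
      by (auto simp: section_fun_def intro!: powr_mono2 hvol_mono hvol_nonneg compact_hyperplane_Int S K)
  next
    case 3
    show ?thesis
      unfolding section_fun_def
      by (rule hvol_brunn_minkowski[where tA = x and tB = y and tZ = "\<alpha> * x + (1 - \<alpha>) * y", OF v n2 compact_hyperplane_Int[OF K]
            hyperplane_Int_nonempty_of_supp[OF K x] _ compact_hyperplane_Int[OF S]
            hyperplane_Int_nonempty_of_supp[OF S y] _ compact_hyperplane_Int[OF S] _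
            minkowski_comb_kernel_sections_subset[OF \<alpha>] 3]) auto
  qed simp
qed

lemma geometric_mean_le_of_power_mean_le:
  fixes a b z e \<alpha> :: real
  assumes "0 < a" "0 < b" "0 \<le> z" "0 < e" "0 \<le> \<alpha>" "\<alpha> \<le> 1"
    and le: "\<alpha> * a powr e + (1 - \<alpha>) * b powr e \<le> z powr e"
  shows "a powr \<alpha> * b powr (1 - \<alpha>) \<le> z"
proof -
  have "(a powr \<alpha> * b powr (1 - \<alpha>)) powr e = (a powr e) powr \<alpha> * (b powr e) powr (1 - \<alpha>)"
    by (simp add: powr_powr powr_mult mult.commute)
  also have "\<dots> \<le> \<alpha> * a powr e + (1 - \<alpha>) * b powr e"
    using assms by (intro Youngs_inequality_0) auto
  finally have "(a powr \<alpha> * b powr (1 - \<alpha>)) powr e \<le> z powr e" using le by linarith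
  then show ?thesis
    using powr_less_mono2[of e z "a powr \<alpha> * b powr (1 - \<alpha>)"] assms by force
qed

lemma section_fun_kernel_log_concave:
  fixes S :: "'a::euclidean_space set"
  assumes n2: "2 \<le> DIM('a)" and S: "compact S" and v: "norm v = 1" and \<alpha>: "0 \<le> \<alpha>" "\<alpha> \<le> 1"
  shows "mpow (section_fun v (kernel S) x) \<alpha> * mpow (section_fun v S y) (1 - \<alpha>)
    \<le> section_fun v S (\<alpha> * x + (1 - \<alpha>) * y)"
proof -
  define fK fS where "fK = section_fun v (kernel S)" and "fS = section_fun v S"
  have nonneg: "0 \<le> fK t" "0 \<le> fS t" for t by (simp_all add: fK_def fS_def section_fun_def hvol_nonneg)
  consider "\<alpha> = 0" | "\<alpha> = 1" | "0 < \<alpha>" "\<alpha> < 1" "fK x = 0 \<or> fS y = 0"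
    | "0 < \<alpha>" "\<alpha> < 1" "0 < fK x" "0 < fS y"
    using \<alpha> nonneg[of x] nonneg[of y] by (auto simp: less_le)
  then have "mpow (fK x) \<alpha> * mpow (fS y) (1 - \<alpha>) \<le> fS (\<alpha> * x + (1 - \<alpha>) * y)"
  proof cases
    case 2
    have "fK x \<le> fS x"
      using kernel_subset[of S] unfolding fK_def fS_def section_fun_def
      by (auto intro!: hvol_mono compact_hyperplane_Int compact_kernel S)
    then show ?thesis using 2 nonneg[of x] by (simp add: mpow_def)
  next
    case 3
    then show ?thesis using nonneg by (auto simp: mpow_def)
  next
    case 4
    then have "x \<in> supp fK" "y \<in> supp fS"
      unfolding supp_def by (auto intro: closure_subset[THEN subsetD])
    then have "\<alpha> * fK x powr (1 / (real DIM('a) - 1)) + (1 - \<alpha>) * fS y powr (1 / (real DIM('a) - 1))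
        \<le> fS (\<alpha> * x + (1 - \<alpha>) * y) powr (1 / (real DIM('a) - 1))"
      unfolding fK_def fS_def by (rule section_fun_kernel_brunn_minkowski[OF n2 S v _ _ \<alpha>])
    then have "fK x powr \<alpha> * fS y powr (1 - \<alpha>) \<le> fS (\<alpha> * x + (1 - \<alpha>) * y)"
      using 4 n2 nonneg \<alpha> by (intro geometric_mean_le_of_power_mean_le) auto
    then show ?thesis using 4 by (simp add: mpow_def)
  qed (simp add: mpow_def nonneg)
  then show ?thesis by (simp add: fK_def fS_def)
qed

theorem lemma5p1:
  fixes S :: "(real ^ 'n) set" and v :: "real ^ 'n"
  assumes "CARD('n) \<ge> 2"
    and "star_body S"
    and "norm v = 1"
  shows "(\<forall>x \<in> supp (section_fun v (kernel S)). \<forall>y \<in> supp (section_fun v S).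
            \<forall>\<alpha> \<in> {0..1::real}.
              section_fun v S (\<alpha> * x + (1 - \<alpha>) * y) powr (1 / (real CARD('n) - 1))
              \<ge> \<alpha> * section_fun v (kernel S) x powr (1 / (real CARD('n) - 1))
                + (1 - \<alpha>) * section_fun v S y powr (1 / (real CARD('n) - 1)))
       \<and> (\<forall>x y :: real. \<forall>\<alpha> \<in> {0..1::real}.
              section_fun v S (\<alpha> * x + (1 - \<alpha>) * y)
              \<ge> mpow (section_fun v (kernel S) x) \<alpha> * mpow (section_fun v S y) (1 - \<alpha>))"
proof -
  have S: "compact S" using assms(2) by (simp add: star_body_def compact_body_def)
  have n2: "2 \<le> DIM(real ^ 'n)" using assms(1) by simp
  show ?thesis
    using section_fun_kernel_brunn_minkowski[OF n2 S assms(3)]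
      section_fun_kernel_log_concave[OF n2 S assms(3)]
    by simp
qed

end
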